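(* For every integer $\kappa\ge 1$: if there exists a $\frac{\kappa+1}{\kappa}$-APLS for the minimum edge cover problem on graphs of odd-girth at least $2\kappa+1$ with proof size $r$, then there exists a PLS for the minimum edge cover problem on rings with $2\kappa+1$ nodes with proof size $r+O(1)$.
   Context: All graphs are finite, connected and undirected, $G=(V,E)$, $n=|V|$, $N(v)$ is the set of neighbors of $v$; each node distinguishes its incident edges by port numbers. An input assignment $\mathsf{I}:V\to\{0,1\}^*$ and an output assignment $\mathsf{O}:V\to\{0,1\}^*$ give each node a local input and a local output; an IO graph $\langle G,\mathsf I,\mathsf O\rangle$ is a configuration graph with $S(v)=\mathsf I(v)\cdot\mathsf O(v)$. Given a universe $\mathcal U$ of configuration graphs and disjoint families $\mathcal F_Y,\mathcal F_N\subseteq\mathcal U$, a gap proof labeling scheme (GPLS) consists of a prover which, given a configuration graph in $\mathcal F_Y$, assigns a label $L(v)\in\{0,1\}^*$ to every node, and a verifier which at each node $v$ receives only $\langle S(v),L(v),L^N(v)\rangle$, where $L^N(v)$ is the vector of labels of $v$'s neighbors (indexed by port), and outputs True or False; the verifier accepts if all nodes output True and rejects otherwise. The GPLS is correct if (i) for every configuration graph in $\mathcal F_Y$ the verifier accepts under the prover's labels, and (ii) for every configuration graph in $\mathcal F_N$ the verifier rejects under every label assignment. Its proof size is the maximum label length assigned by the prover over configuration graphs in $\mathcal F_Y$. For an optimization problem $\Psi=\langle\Pi,f\rangle$ ($\Pi$ a set of IO graphs = feasible solutions, $f$ integer objective, $OPT_\Psi(G,\mathsf I)$ the optimum over feasible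 $\mathsf O$), and $\alpha\ge1$, an $\alpha$-APLS is a GPLS over $\mathcal U=\{\langle G,\mathsf I,\mathsf O\rangle:\langle G,\mathsf I\rangle\text{ admits a feasible solution}\}$ with $\mathcal F_Y$ the IO graphs in $\Pi$ with $f=OPT_\Psi$, and $\mathcal F_N$ equal to $\mathcal U$ minus the IO graphs in $\Pi$ with $f\le\alpha\cdot OPT_\Psi$ (minimization) resp. $f\ge OPT_\Psi/\alpha$ (maximization). A PLS is a $1$-APLS. Restricting to a graph family means the universe contains only IO graphs whose underlying graph lies in the family. Minimum edge cover: the output assignment encodes a set $C\subseteq E$; it is feasible iff $C$ is an edge cover (every node is incident on an edge of $C$), and $f=|C|$ is minimized. The odd-girth of a graph is the length of its shortest odd cycle. A ring is a cycle graph. *)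

theory Defs
  imports Complex_Main
begin

text \<open>A graph has a vertex set (node names are natural numbers; they are not visible
to the verifier) and, for each node v, the list of its neighbours indexed by port
number: port i (i < length (nbrs G v)) leads to nbrs G v ! i.\<close>

record pgraph =
  verts :: "nat set"
  nbrs  :: "nat \<Rightarrow> nat list"

definition adj_rel :: "pgraph \<Rightarrow> (nat \<times> nat) set" where
  "adj_rel G = {(u, v). u \<in> verts G \<and> v \<in> set (nbrs G u)}"

definition valid_graph :: "pgraph \<Rightarrow> bool" where
  "valid_graph G \<longleftrightarrow>
     finite (verts G) \<and> verts G \<noteq> {} \<and>
     (\<forall>v \<in> verts G. distinct (nbrs G v) \<and> set (nbrs G v) \<subseteq> verts G \<and> v \<notin> set (nbrs G v)) \<and>
     (\<forall>u \<in> verts G. \<forall>v \<in> verts G. v \<in> set (nbrs G u) \<longleftrightarrow> u \<in> set (nbrs G v)) \<and>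
     (\<forall>u \<in> verts G. \<forall>v \<in> verts G. (u, v) \<in> (adj_rel G)\<^sup>*)"

definition edges :: "pgraph \<Rightarrow> nat set set" where
  "edges G = {{u, v} | u v. u \<in> verts G \<and> v \<in> set (nbrs G u)}"

definition is_cycle :: "pgraph \<Rightarrow> nat list \<Rightarrow> bool" where
  "is_cycle G cs \<longleftrightarrow>
     length cs \<ge> 3 \<and> distinct cs \<and> set cs \<subseteq> verts G \<and>
     (\<forall>i < length cs. cs ! ((i + 1) mod length cs) \<in> set (nbrs G (cs ! i)))"

text \<open>Odd-girth (length of a shortest odd cycle) is at least m
(vacuously true for graphs without odd cycles, whose odd-girth is infinite).\<close>
definition odd_girth_ge :: "pgraph \<Rightarrow> nat \<Rightarrow> bool" where
  "odd_girth_ge G m \<longleftrightarrow> (\<forall>cs. is_cycle G cs \<and> odd (length cs) \<longrightarrow> length cs \<ge> m)"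

definition is_ring :: "pgraph \<Rightarrow> nat \<Rightarrow> bool" where
  "is_ring G n \<longleftrightarrow>
     (\<exists>cs. is_cycle G cs \<and> set cs = verts G \<and> length cs = n) \<and>
     (\<forall>v \<in> verts G. length (nbrs G v) = 2)"

type_synonym assignment = "nat \<Rightarrow> bool list"
type_synonym iograph = "pgraph \<times> assignment \<times> assignment"

text \<open>A verifier maps the local view \<open>\<langle>S(v), L(v), L^N(v)\<rangle>\<close> to True/False;
\<open>L^N(v)\<close> is the list of neighbour labels indexed by port.\<close>
type_synonym verifier = "bool list \<Rightarrow> bool list \<Rightarrow> bool list list \<Rightarrow> bool"

definition accepts :: "verifier \<Rightarrow> iograph \<Rightarrow> assignment \<Rightarrow> bool" where
  "accepts ver x L \<longleftrightarrow>
     (case x of (G, I, Out) \<Rightarrow>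
        \<forall>v \<in> verts G. ver (I v @ Out v) (L v) (map L (nbrs G v)))"

text \<open>Existence of a GPLS over universe U (implicit in FY/FN) with yes-family FY,
no-family FN, and proof size at most r.  The prover is an arbitrary choice of a
labelling for each yes-instance.\<close>
definition has_GPLS :: "iograph set \<Rightarrow> iograph set \<Rightarrow> nat \<Rightarrow> bool" where
  "has_GPLS FY FN r \<longleftrightarrow>
     (\<exists>ver :: verifier.
        (\<forall>x \<in> FY. \<exists>L. (\<forall>v \<in> verts (fst x). length (L v) \<le> r) \<and> accepts ver x L) \<and>
        (\<forall>x \<in> FN. \<forall>L. \<not> accepts ver x L))"

definition OPT_min :: "(iograph \<Rightarrow> bool) \<Rightarrow> (iograph \<Rightarrow> int) \<Rightarrow> pgraph \<Rightarrow> assignment \<Rightarrow> int" where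
  "OPT_min Pi f G I = (LEAST k. \<exists>Out. Pi (G, I, Out) \<and> f (G, I, Out) = k \<and>
                         (\<forall>Out'. Pi (G, I, Out') \<longrightarrow> k \<le> f (G, I, Out')))"

definition APLS_universe :: "(iograph \<Rightarrow> bool) \<Rightarrow> (pgraph \<Rightarrow> bool) \<Rightarrow> iograph set" where
  "APLS_universe Pi fam =
     {(G, I, Out). valid_graph G \<and> fam G \<and> (\<exists>Out'. Pi (G, I, Out'))}"

definition APLS_yes :: "(iograph \<Rightarrow> bool) \<Rightarrow> (iograph \<Rightarrow> int) \<Rightarrow> (pgraph \<Rightarrow> bool) \<Rightarrow> iograph set" where
  "APLS_yes Pi f fam =
     {(G, I, Out). (G, I, Out) \<in> APLS_universe Pi fam \<and> Pi (G, I, Out) \<and> f (G, I, Out) = OPT_min Pi f G I}"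

definition APLS_no_min :: "(iograph \<Rightarrow> bool) \<Rightarrow> (iograph \<Rightarrow> int) \<Rightarrow> (pgraph \<Rightarrow> bool) \<Rightarrow> real \<Rightarrow> iograph set" where
  "APLS_no_min Pi f fam \<alpha> =
     {(G, I, Out). (G, I, Out) \<in> APLS_universe Pi fam \<and>
        \<not> (Pi (G, I, Out) \<and> real_of_int (f (G, I, Out)) \<le> \<alpha> * real_of_int (OPT_min Pi f G I))}"

text \<open>There is an alpha-APLS with proof size at most r for the minimization problem
(Pi, f) restricted to the graph family fam.  A PLS is the case alpha = 1.\<close>
definition has_APLS_min :: "(iograph \<Rightarrow> bool) \<Rightarrow> (iograph \<Rightarrow> int) \<Rightarrow> (pgraph \<Rightarrow> bool) \<Rightarrow> real \<Rightarrow> nat \<Rightarrow> bool" where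
  "has_APLS_min Pi f fam \<alpha> r \<longleftrightarrow>
     has_GPLS (APLS_yes Pi f fam) (APLS_no_min Pi f fam \<alpha>) r"

text \<open>Encoding convention: there is no input (I v = []); the output Out v of node v is a
bit string of length deg v whose i-th bit says whether the edge at port i is in C;
both endpoints of an edge must agree.\<close>
definition ec_encoding_ok :: "pgraph \<Rightarrow> assignment \<Rightarrow> bool" where
  "ec_encoding_ok G Out \<longleftrightarrow>
     (\<forall>v \<in> verts G. length (Out v) = length (nbrs G v)) \<and>
     (\<forall>u \<in> verts G. \<forall>i < length (nbrs G u). \<forall>j < length (nbrs G (nbrs G u ! i)).
        nbrs G (nbrs G u ! i) ! j = u \<longrightarrow> (Out u ! i \<longleftrightarrow> Out (nbrs G u ! i) ! j))"

definition ec_set :: "pgraph \<Rightarrow> assignment \<Rightarrow> nat set set" where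
  "ec_set G Out = {{u, nbrs G u ! i} | u i. u \<in> verts G \<and> i < length (nbrs G u) \<and> Out u ! i}"

definition is_edge_cover :: "pgraph \<Rightarrow> nat set set \<Rightarrow> bool" where
  "is_edge_cover G C \<longleftrightarrow> C \<subseteq> edges G \<and> (\<forall>v \<in> verts G. \<exists>e \<in> C. v \<in> e)"

fun ec_feasible :: "iograph \<Rightarrow> bool" where
  "ec_feasible (G, I, Out) \<longleftrightarrow>
     (\<forall>v \<in> verts G. I v = []) \<and> ec_encoding_ok G Out \<and> is_edge_cover G (ec_set G Out)"

fun ec_size :: "iograph \<Rightarrow> int" where
  "ec_size (G, I, Out) = int (card (ec_set G Out))"

end

theory Submission
  imports Defs
begin

text \<open>
  A verifier only sees, at a node of a ring, the labels and cover bits around that node. Label the odd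
  ring on 2\<kappa> + 1 nodes, with its optimal cover (every other edge, one doubly covered node), by labels of
  length r. Cutting the ring between two positions with equal boundary state, of which there are at
  most 2^(2r + 3), and repeating, yields an accepted ring of length d \<le> 2^(2r + 3) that still has a
  doubly covered node. If \<kappa> > 2^(2r + 3), going around it K = 2(2\<kappa> + 1) times gives an accepted even
  ring (so without odd cycles) of length M = dK \<ge> 2\<kappa> + 1 with K doubly covered nodes: a cover of size
  (M + K)/2 > (\<kappa> + 1)/\<kappa> \<cdot> M/2, a no-instance. Hence the approximate scheme forces \<kappa> \<le> 2^(2r + 3).

  For such \<kappa> there is an exact scheme on the ring of 2\<kappa> + 1 nodes: label the nodes by the letters of
  a cyclic word in which consecutive letters differ, letters two apart differ, and each pair of
  consecutive letters determines its position. Checking the neighbours' letters pins down a global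
  position (up to reflection), and with it the optimal cover. Such a word exists over an alphabet of
  2Q + 1 letters whenever Q^2 \<ge> 2\<kappa>; taking Q = 2^(r + 2), the labels need only r + 4 bits.
\<close>

lemma OPT_min_eqI:
  assumes "Pi (G, I, Out)" and "\<And>Out'. Pi (G, I, Out') \<Longrightarrow> f (G, I, Out) \<le> f (G, I, Out')"
  shows "OPT_min Pi f G I = f (G, I, Out)"
  unfolding OPT_min_def
proof (rule Least_equality)
  fix k assume "\<exists>Out'. Pi (G, I, Out') \<and> f (G, I, Out') = k \<and>
      (\<forall>Out''. Pi (G, I, Out'') \<longrightarrow> k \<le> f (G, I, Out''))"
  then show "f (G, I, Out) \<le> k" using assms by metis
qed (use assms in blast)

lemma finite_edges: "finite (verts G) \<Longrightarrow> finite (edges G)"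
proof -
  assume "finite (verts G)"
  then have "finite ((\<lambda>(u, v). {u, v}) ` (SIGMA u:verts G. set (nbrs G u)))" by auto
  moreover have "edges G \<subseteq> (\<lambda>(u, v). {u, v}) ` (SIGMA u:verts G. set (nbrs G u))"
    unfolding edges_def by auto
  ultimately show ?thesis by (rule finite_subset[rotated])
qed

lemma card_verts_le_edge_cover:
  assumes "finite (verts G)" and "is_edge_cover G C"
  shows "card (verts G) \<le> 2 * card C"
proof -
  have "finite C" using assms finite_edges unfolding is_edge_cover_def by (meson finite_subset)
  have small: "finite e \<and> card e \<le> 2" if "e \<in> C" for e
  proof -
    have "e \<in> edges G" using that assms(2) unfolding is_edge_cover_def by auto
    then obtain u v where "e = {u, v}" unfolding edges_def by auto
    then show ?thesis by (simp add: card_insert_le_m1)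
  qed
  have "verts G \<subseteq> \<Union>C" using assms unfolding is_edge_cover_def by auto
  then have "card (verts G) \<le> card (\<Union>C)" using \<open>finite C\<close> small by (intro card_mono) auto
  also have "\<dots> \<le> (\<Sum>e\<in>C. card e)" by (rule card_Union_le_sum_card)
  also have "\<dots> \<le> (\<Sum>e\<in>C. 2)" using small by (intro sum_mono) auto
  finally show ?thesis by simp
qed

definition cyc_succ :: "nat \<Rightarrow> nat \<Rightarrow> nat" where "cyc_succ n j = (j + 1) mod n"
definition cyc_pred :: "nat \<Rightarrow> nat \<Rightarrow> nat" where "cyc_pred n j = (j + n - 1) mod n"

lemma cyc_succ_less: "n > 0 \<Longrightarrow> cyc_succ n j < n"
  unfolding cyc_succ_def by simp

lemma cyc_pred_less: "n > 0 \<Longrightarrow> cyc_pred n j < n"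
  unfolding cyc_pred_def by simp

lemma cyc_succ_eq: "k < n \<Longrightarrow> cyc_succ n k = (if k + 1 = n then 0 else k + 1)"
  unfolding cyc_succ_def by auto

lemma cyc_pred_eq: "k < n \<Longrightarrow> cyc_pred n k = (if k = 0 then n - 1 else k - 1)"
proof (cases "k = 0")
  case False
  assume "k < n"
  then have "cyc_pred n k = ((k - 1) + n) mod n" unfolding cyc_pred_def using False by simp
  also have "\<dots> = k - 1" using \<open>k < n\<close> by simp
  finally show ?thesis using False by simp
qed (simp add: cyc_pred_def)

lemma cyc_succ_mod: "cyc_succ n (a mod n) = (a + 1) mod n"
  unfolding cyc_succ_def by (simp add: mod_Suc_eq)

lemma cyc_pred_mod: "n > 0 \<Longrightarrow> cyc_pred n (a mod n) = (a + n - 1) mod n"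
proof -
  assume "n > 0"
  then have "cyc_pred n (a mod n) = (a mod n + (n - 1)) mod n" unfolding cyc_pred_def by simp
  also have "\<dots> = (a + (n - 1)) mod n" by (simp add: mod_add_left_eq)
  finally show ?thesis using \<open>n > 0\<close> by simp
qed

lemma cyc_succ_pred: "j < n \<Longrightarrow> cyc_succ n (cyc_pred n j) = j"
  by (simp add: cyc_succ_eq cyc_pred_eq cyc_pred_less)

lemma cyc_pred_succ: "j < n \<Longrightarrow> cyc_pred n (cyc_succ n j) = j"
  by (auto simp: cyc_succ_eq cyc_pred_eq cyc_succ_less)

lemma cyc_succ_neq: "n \<ge> 2 \<Longrightarrow> j < n \<Longrightarrow> cyc_succ n j \<noteq> j"
  by (simp add: cyc_succ_eq)

lemma cyc_pred_neq: "n \<ge> 2 \<Longrightarrow> j < n \<Longrightarrow> cyc_pred n j \<noteq> j"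
  by (auto simp: cyc_pred_eq)

lemma cyc_succ_succ_neq: "n \<ge> 3 \<Longrightarrow> j < n \<Longrightarrow> cyc_succ n (cyc_succ n j) \<noteq> j"
  by (auto simp: cyc_succ_eq cyc_succ_less)

lemma cyc_succ_neq_pred: "n \<ge> 3 \<Longrightarrow> j < n \<Longrightarrow> cyc_succ n j \<noteq> cyc_pred n j"
  by (metis cyc_succ_succ_neq cyc_succ_pred)

lemma even_cyc_pred_or_even: "j < n \<Longrightarrow> even (cyc_pred n j) \<or> even j"
  by (auto simp: cyc_pred_eq)

lemma even_or_even_cyc_succ: "odd n \<Longrightarrow> j < n \<Longrightarrow> even j \<or> even (cyc_succ n j)"
  by (auto simp: cyc_succ_eq)

lemma cyc_pred_add_Suc_mod: "n > 0 \<Longrightarrow> (cyc_pred n x + Suc j) mod n = (x + j) mod n"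
proof -
  assume "n > 0"
  have "(cyc_pred n x + Suc j) mod n = ((x + n - 1) mod n + Suc j) mod n"
    unfolding cyc_pred_def ..
  also have "\<dots> = (x + n - 1 + Suc j) mod n" by (rule mod_add_left_eq)
  also have "x + n - 1 + Suc j = (x + j) + n" using \<open>n > 0\<close> by simp
  finally show ?thesis by simp
qed

lemma mod_add_left_cancel_less:
  fixes a j k n :: nat
  assumes "(a + j) mod n = (a + k) mod n" and "j < n" and "k < n"
  shows "j = k"
proof -
  have "(int a + int j) mod int n = (int a + int k) mod int n"
    using assms(1) by (metis of_nat_add of_nat_mod)
  then have "((int a + int j) - int a) mod int n = ((int a + int k) - int a) mod int n"
    by (rule mod_diff_cong) simp
  then show ?thesis using assms(2,3) by simp
qed

lemma cyc_succ_add_mod: "cyc_succ n ((j + a) mod n) = (cyc_succ n j + a) mod n"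
  unfolding cyc_succ_def by (simp add: mod_simps ac_simps)

lemma cyc_pred_add_mod: "n > 0 \<Longrightarrow> cyc_pred n ((j + a) mod n) = (cyc_pred n j + a) mod n"
proof -
  assume "n > 0"
  have "cyc_pred n ((j + a) mod n) = ((j + a) mod n + (n - 1)) mod n"
    unfolding cyc_pred_def using \<open>n > 0\<close> by simp
  also have "\<dots> = (j + (n - 1) + a) mod n" by (simp add: mod_simps ac_simps)
  also have "\<dots> = (cyc_pred n j + a) mod n"
    unfolding cyc_pred_def using \<open>n > 0\<close> by (simp add: mod_simps)
  finally show ?thesis .
qed

text \<open>An edge set of the cycle on {..<n} is given by \<beta>, where \<beta> j says that the edge {j, j + 1} is
  chosen. Node j is covered iff \<beta> (j - 1) \<or> \<beta> j, and doubly covered iff \<beta> (j - 1) \<and> \<beta> j.\<close>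

lemma card_ones_plus_zeros: "card {j. j < (n::nat) \<and> \<beta> j} + card {j. j < n \<and> \<not> \<beta> j} = n"
proof -
  have "{j. j < n \<and> \<beta> j} \<union> {j. j < n \<and> \<not> \<beta> j} = {..<n}" by auto
  moreover have "card ({j. j < n \<and> \<beta> j} \<union> {j. j < n \<and> \<not> \<beta> j}) =
      card {j. j < n \<and> \<beta> j} + card {j. j < n \<and> \<not> \<beta> j}"
    by (rule card_Un_disjoint) auto
  ultimately show ?thesis by simp
qed

lemma card_ones_eq:
  assumes n: "n > 0" and cover: "\<forall>j<n. \<beta> (cyc_pred n j) \<or> \<beta> j"
  shows "card {j. j < n \<and> \<beta> j} =
    card {j. j < n \<and> \<not> \<beta> j} + card {j. j < n \<and> \<beta> j \<and> \<beta> (cyc_pred n j)}"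
proof -
  let ?O = "{j. j < n \<and> \<beta> j}" and ?Z = "{j. j < n \<and> \<not> \<beta> j}"
    and ?D = "{j. j < n \<and> \<beta> j \<and> \<beta> (cyc_pred n j)}"
  have eq: "?O = cyc_succ n ` ?Z \<union> ?D"
  proof (intro set_eqI iffI)
    fix j assume j: "j \<in> ?O"
    show "j \<in> cyc_succ n ` ?Z \<union> ?D"
    proof (cases "\<beta> (cyc_pred n j)")
      case True then show ?thesis using j by auto
    next
      case False
      then have "cyc_pred n j \<in> ?Z" using cyc_pred_less[OF n] by simp
      moreover have "cyc_succ n (cyc_pred n j) = j" using cyc_succ_pred j by auto
      ultimately have "j \<in> cyc_succ n ` ?Z" by (metis image_eqI)
      then show ?thesis by (rule UnI1)
    qed
  next
    fix j assume "j \<in> cyc_succ n ` ?Z \<union> ?D"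
    then show "j \<in> ?O"
    proof
      assume "j \<in> cyc_succ n ` ?Z"
      then obtain i where i: "i < n" "\<not> \<beta> i" "j = cyc_succ n i" by auto
      have "j < n" using i cyc_succ_less n by simp
      moreover have "cyc_pred n j = i" using i cyc_pred_succ by simp
      ultimately show ?thesis using cover i by auto
    qed auto
  qed
  have disj: "cyc_succ n ` ?Z \<inter> ?D = {}"
  proof (rule ccontr)
    assume "cyc_succ n ` ?Z \<inter> ?D \<noteq> {}"
    then obtain i where i: "i < n" "\<not> \<beta> i" "\<beta> (cyc_pred n (cyc_succ n i))" by auto
    then show False using cyc_pred_succ by simp
  qed
  have inj: "inj_on (cyc_succ n) ?Z"
    by (rule inj_onI) (metis (no_types, lifting) mem_Collect_eq cyc_pred_succ)
  have "card ?O = card (cyc_succ n ` ?Z) + card ?D"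
    unfolding eq by (rule card_Un_disjoint) (use disj in auto)
  also have "card (cyc_succ n ` ?Z) = card ?Z" using inj by (rule card_image)
  finally show ?thesis .
qed

lemma card_doubles_eq_one:
  assumes n: "n = 2 * k + 1" and cover: "\<forall>j<n. \<beta> (cyc_pred n j) \<or> \<beta> j"
    and small: "card {j. j < n \<and> \<beta> j} \<le> k + 1"
  shows "card {j. j < n \<and> \<beta> j \<and> \<beta> (cyc_pred n j)} = 1"
proof -
  let ?D = "{j. j < n \<and> \<beta> j \<and> \<beta> (cyc_pred n j)}"
  have ones: "card {j. j < n \<and> \<beta> j} = card {j. j < n \<and> \<not> \<beta> j} + card ?D"
    using card_ones_eq[OF _ cover] n by simp
  moreover have "card {j. j < n \<and> \<beta> j} + card {j. j < n \<and> \<not> \<beta> j} = n"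
    by (rule card_ones_plus_zeros)
  ultimately have "card ?D \<le> 1" using small n by linarith
  moreover have "card ?D \<noteq> 0"
  proof
    assume "card ?D = 0"
    then have "2 * card {j. j < n \<and> \<not> \<beta> j} = 2 * k + 1"
      using ones card_ones_plus_zeros[of n \<beta>] n by linarith
    then show False by presburger
  qed
  ultimately show ?thesis by linarith
qed

lemma alternates_from_double:
  assumes cover: "\<forall>j<n. \<beta> (cyc_pred n j) \<or> \<beta> j"
    and double: "{j. j < n \<and> \<beta> j \<and> \<beta> (cyc_pred n j)} = {s}"
    and q: "q < n"
  shows "\<beta> ((s + q) mod n) \<longleftrightarrow> even q"
  using q
proof (induction q)
  case 0
  have "\<beta> s" "s < n" using double by auto
  then show ?case by simp
next
  case (Suc q)
  let ?a = "(s + q) mod n" and ?b = "(s + Suc q) mod n"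
  have IH: "\<beta> ?a \<longleftrightarrow> even q" using Suc by simp
  have "s < n" using double by auto
  have unique: "\<And>j. j < n \<Longrightarrow> \<beta> j \<Longrightarrow> \<beta> (cyc_pred n j) \<Longrightarrow> j = s" using double by auto
  have "?a < n" "?b < n" using Suc.prems by auto
  have "?b = cyc_succ n ?a" by (simp add: cyc_succ_mod)
  then have pred_b: "cyc_pred n ?b = ?a" using cyc_pred_succ \<open>?a < n\<close> by simp
  have "?b \<noteq> s"
  proof (cases "s + Suc q < n")
    case False
    then have "?b = s + Suc q - n" using \<open>s < n\<close> Suc.prems by (simp add: le_mod_geq)
    moreover have "s + Suc q - n \<noteq> s" using False Suc.prems by linarith
    ultimately show ?thesis by simp
  qed simp
  then have "\<not> (\<beta> ?b \<and> \<beta> (cyc_pred n ?b))" using unique \<open>?b < n\<close> by blast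
  moreover have "\<beta> (cyc_pred n ?b) \<or> \<beta> ?b" using cover \<open>?b < n\<close> by blast
  ultimately have "\<beta> ?b \<longleftrightarrow> \<not> \<beta> ?a" unfolding pred_b by blast
  then show ?case using IH by simp
qed

lemma small_cover_alternates:
  assumes "n = 2 * k + 1" and cover: "\<forall>j<n. \<beta> (cyc_pred n j) \<or> \<beta> j"
    and "card {j. j < n \<and> \<beta> j} \<le> k + 1"
  obtains s where "s < n" and "\<And>q. q < n \<Longrightarrow> \<beta> ((s + q) mod n) \<longleftrightarrow> even q"
proof -
  obtain s where double: "{j. j < n \<and> \<beta> j \<and> \<beta> (cyc_pred n j)} = {s}"
    using card_doubles_eq_one[OF assms] card_1_singletonE by blast
  then show thesis using that alternates_from_double[OF cover double] by auto
qed

lemma card_even_below: "card {j. j < n \<and> even j} = (n + 1) div 2"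
proof (induction n)
  case (Suc n)
  have "{j. j < Suc n \<and> even j} = {j. j < n \<and> even j} \<union> (if even n then {n} else {})"
    by (auto elim: less_SucE)
  then show ?case using Suc by (auto simp: card_insert_if elim: less_SucE)
qed simp

lemma card_perm_filter:
  assumes "inj_on p {..<n}" and "p ` {..<n} \<subseteq> {..<n}"
  shows "card {j. j < n \<and> P (p j)} = card {q. q < (n::nat) \<and> P q}"
proof -
  have "p ` {..<n} = {..<n}" using endo_inj_surj[OF finite_lessThan assms(2,1)] .
  then have "p ` {j. j < n \<and> P (p j)} = {q. q < n \<and> P q}" by auto
  moreover have "inj_on p {j. j < n \<and> P (p j)}" using assms(1) by (rule inj_on_subset) auto
  ultimately show ?thesis by (metis card_image)
qed

locale ring_enum =
  fixes G :: pgraph and cs :: "nat list" and n :: nat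
  assumes n_ge3: "n \<ge> 3"
    and length_cs: "length cs = n"
    and distinct_cs: "distinct cs"
    and set_cs: "set cs = verts G"
    and nbrs_cs: "j < n \<Longrightarrow> length (nbrs G (cs!j)) = 2 \<and> distinct (nbrs G (cs!j)) \<and>
                    set (nbrs G (cs!j)) = {cs!(cyc_succ n j), cs!(cyc_pred n j)}"

lemma ring_enum_of_is_ring:
  assumes "valid_graph G" and "is_ring G n" and "n \<ge> 3"
  obtains cs where "ring_enum G cs n"
proof -
  obtain cs where c: "is_cycle G cs" "set cs = verts G" "length cs = n"
    and deg: "\<forall>v \<in> verts G. length (nbrs G v) = 2"
    using assms(2) unfolding is_ring_def by blast
  have "distinct cs" using c unfolding is_cycle_def by auto
  have in_verts: "cs!j \<in> verts G" if "j < n" for j using c that by (metis nth_mem)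
  have succ_adj: "cs!(cyc_succ n j) \<in> set (nbrs G (cs!j))" if "j < n" for j
    using c that unfolding is_cycle_def cyc_succ_def by auto
  have sym: "\<forall>u \<in> verts G. \<forall>w \<in> verts G. w \<in> set (nbrs G u) \<longleftrightarrow> u \<in> set (nbrs G w)"
    and distinct_nbrs: "\<forall>u \<in> verts G. distinct (nbrs G u)"
    using assms(1) unfolding valid_graph_def by blast+
  have nbrs_eq: "set (nbrs G (cs!j)) = {cs!(cyc_succ n j), cs!(cyc_pred n j)}" if j: "j < n" for j
  proof -
    have pj: "cyc_pred n j < n" using cyc_pred_less j by simp
    have "cs!j \<in> set (nbrs G (cs!(cyc_pred n j)))" using succ_adj[OF pj] cyc_succ_pred[OF j] by simp
    then have "cs!(cyc_pred n j) \<in> set (nbrs G (cs!j))" using sym in_verts j pj by blast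
    then have "{cs!(cyc_succ n j), cs!(cyc_pred n j)} \<subseteq> set (nbrs G (cs!j))" using succ_adj[OF j] by auto
    moreover have "cs!(cyc_succ n j) \<noteq> cs!(cyc_pred n j)"
      using cyc_succ_neq_pred[OF assms(3) j] \<open>distinct cs\<close> c(3) cyc_succ_less pj j
      by (simp add: nth_eq_iff_index_eq)
    moreover have "card (set (nbrs G (cs!j))) = 2"
      using deg distinct_nbrs in_verts[OF j] by (simp add: distinct_card)
    ultimately show ?thesis by (metis card_2_iff card_subset_eq finite_set)
  qed
  have "ring_enum G cs n"
    using assms(3) c \<open>distinct cs\<close> deg distinct_nbrs in_verts nbrs_eq by unfold_locales auto
  then show thesis by (rule that)
qed

definition ring_output :: "pgraph \<Rightarrow> nat list \<Rightarrow> nat \<Rightarrow> assignment \<Rightarrow> (nat \<Rightarrow> bool) \<Rightarrow> bool" where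
  "ring_output G cs n Out \<beta> \<longleftrightarrow> (\<forall>j<n. length (Out (cs!j)) = 2 \<and>
     (\<forall>k<2. Out (cs!j) ! k = (if nbrs G (cs!j) ! k = cs!(cyc_succ n j) then \<beta> j else \<beta> (cyc_pred n j))))"

context ring_enum
begin

lemma nth_cs_eq_iff: "j < n \<Longrightarrow> k < n \<Longrightarrow> cs!j = cs!k \<longleftrightarrow> j = k"
  using distinct_cs length_cs by (simp add: nth_eq_iff_index_eq)

lemma vert_cs: "v \<in> verts G \<Longrightarrow> \<exists>j<n. v = cs!j"
  using set_cs length_cs by (metis in_set_conv_nth)

lemma n_pos: "n > 0" using n_ge3 by simp

lemma nth_cs_in_verts: "j < n \<Longrightarrow> cs!j \<in> verts G"
proof -
  assume "j < n" then have "cs!j \<in> set cs" using length_cs by simp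
  then show ?thesis using set_cs by simp
qed

lemma nbrs_cs_port:
  "j < n \<Longrightarrow> k < 2 \<Longrightarrow> nbrs G (cs!j) ! k = cs!(cyc_succ n j) \<or> nbrs G (cs!j) ! k = cs!(cyc_pred n j)"
  using nbrs_cs by (metis insert_iff nth_mem singletonD)

lemma nth_cs_succ_neq_pred: "j < n \<Longrightarrow> cs!(cyc_succ n j) \<noteq> cs!(cyc_pred n j)"
  using nth_cs_eq_iff cyc_succ_neq_pred n_ge3 cyc_succ_less cyc_pred_less n_pos by metis

lemma port_exists: "j < n \<Longrightarrow> w \<in> {cs!(cyc_succ n j), cs!(cyc_pred n j)} \<Longrightarrow> \<exists>k<2. nbrs G (cs!j) ! k = w"
  using nbrs_cs by (metis in_set_conv_nth)

lemma ring_edge_inj: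
  assumes "j < n" "k < n" "{cs!j, cs!(cyc_succ n j)} = {cs!k, cs!(cyc_succ n k)}"
  shows "j = k"
proof -
  have nj: "cyc_succ n j < n" "cyc_succ n k < n" using cyc_succ_less n_pos by auto
  from assms(3) have "(cs!j = cs!k \<and> cs!(cyc_succ n j) = cs!(cyc_succ n k)) \<or>
      (cs!j = cs!(cyc_succ n k) \<and> cs!(cyc_succ n j) = cs!k)"
    by (simp add: doubleton_eq_iff)
  then show ?thesis
  proof
    assume "cs!j = cs!k \<and> cs!(cyc_succ n j) = cs!(cyc_succ n k)" then show ?thesis using nth_cs_eq_iff assms
      by blast
  next
    assume "cs!j = cs!(cyc_succ n k) \<and> cs!(cyc_succ n j) = cs!k"
    then have "j = cyc_succ n k" "cyc_succ n j = k" using nth_cs_eq_iff assms nj by blast+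
    then show ?thesis using cyc_succ_succ_neq n_ge3 assms by blast
  qed
qed

lemma ec_set_ring_output:
  assumes Or: "ring_output G cs n Out \<beta>"
  shows "ec_set G Out = (\<lambda>j. {cs!j, cs!(cyc_succ n j)}) ` {j. j < n \<and> \<beta> j}"
proof (intro set_eqI iffI)
  fix e assume "e \<in> ec_set G Out"
  then obtain u i where e: "e = {u, nbrs G u ! i}" "u \<in> verts G" "i < length (nbrs G u)" "Out u ! i"
    unfolding ec_set_def by blast
  obtain j where j: "j < n" "u = cs!j" using vert_cs e(2) by blast
  have i2: "i < 2" using e(3) nbrs_cs j by simp
  have Oi: "Out (cs!j) ! i = (if nbrs G (cs!j) ! i = cs!(cyc_succ n j) then \<beta> j else \<beta> (cyc_pred n j))"
    using Or j i2 unfolding ring_output_def by blast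
  show "e \<in> (\<lambda>j. {cs!j, cs!(cyc_succ n j)}) ` {j. j < n \<and> \<beta> j}"
  proof (cases "nbrs G (cs!j) ! i = cs!(cyc_succ n j)")
    case True then show ?thesis using e j Oi by auto
  next
    case False
    then have p: "nbrs G (cs!j) ! i = cs!(cyc_pred n j)" using nbrs_cs_port j i2 by blast
    have "e = {cs!(cyc_pred n j), cs!(cyc_succ n (cyc_pred n j))}" using e j p cyc_succ_pred by auto
    moreover have "\<beta> (cyc_pred n j)" using Oi False e j by simp
    ultimately show ?thesis using cyc_pred_less n_pos by blast
  qed
next
  fix e assume "e \<in> (\<lambda>j. {cs!j, cs!(cyc_succ n j)}) ` {j. j < n \<and> \<beta> j}"
  then obtain j where j: "j < n" "\<beta> j" "e = {cs!j, cs!(cyc_succ n j)}" by blast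
  obtain k where k: "k < 2" "nbrs G (cs!j) ! k = cs!(cyc_succ n j)" using port_exists j by blast
  have "Out (cs!j) ! k" using Or j k unfolding ring_output_def by simp
  moreover have "cs!j \<in> verts G" using nth_cs_in_verts j by blast
  moreover have "k < length (nbrs G (cs!j))" using nbrs_cs j k by simp
  ultimately show "e \<in> ec_set G Out" unfolding ec_set_def using j k
    by (metis (mono_tags, lifting) mem_Collect_eq)
qed

lemma card_ec_set_ring_output:
  assumes Or: "ring_output G cs n Out \<beta>"
  shows "card (ec_set G Out) = card {j. j < n \<and> \<beta> j}"
  unfolding ec_set_ring_output[OF Or]
  by (rule card_image) (auto intro: inj_onI ring_edge_inj)

lemma ec_encoding_ok_ring_output:
  assumes Or: "ring_output G cs n Out \<beta>"
  shows "ec_encoding_ok G Out"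
  unfolding ec_encoding_ok_def
proof (intro conjI ballI allI impI)
  fix v assume "v \<in> verts G"
  then obtain j where "j < n" "v = cs!j" using vert_cs by blast
  then show "length (Out v) = length (nbrs G v)" using Or nbrs_cs unfolding ring_output_def by simp
next
  fix u i k
  assume u: "u \<in> verts G" and i: "i < length (nbrs G u)" and k: "k < length (nbrs G (nbrs G u ! i))"
    and bk: "nbrs G (nbrs G u ! i) ! k = u"
  obtain j where j: "j < n" "u = cs!j" using vert_cs u by blast
  have i2: "i < 2" using i nbrs_cs j by simp
  have nj: "cyc_succ n j < n" "cyc_pred n j < n" using cyc_succ_less cyc_pred_less n_pos by auto
  show "Out u ! i \<longleftrightarrow> Out (nbrs G u ! i) ! k"
  proof (cases "nbrs G (cs!j) ! i = cs!(cyc_succ n j)")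
    case True
    have k2: "k < 2" using k nbrs_cs nj True j by simp
    have b: "nbrs G (cs!(cyc_succ n j)) ! k = cs!(cyc_pred n (cyc_succ n j))" using bk True j cyc_pred_succ
      by simp
    have ne: "cs!(cyc_pred n (cyc_succ n j)) \<noteq> cs!(cyc_succ n (cyc_succ n j))"
      by (metis nth_cs_succ_neq_pred nj(1))
    have "Out (cs!(cyc_succ n j)) ! k = \<beta> (cyc_pred n (cyc_succ n j))" using Or nj k2 b ne
      unfolding ring_output_def by simp
    moreover have "Out (cs!j) ! i = \<beta> j" using Or j i2 True unfolding ring_output_def by simp
    ultimately show ?thesis using True j cyc_pred_succ by simp
  next
    case False
    then have p: "nbrs G (cs!j) ! i = cs!(cyc_pred n j)" using nbrs_cs_port j i2 by blast
    have k2: "k < 2" using k nbrs_cs nj p j by simp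
    have b: "nbrs G (cs!(cyc_pred n j)) ! k = cs!(cyc_succ n (cyc_pred n j))" using bk p j cyc_succ_pred
      by simp
    have "Out (cs!(cyc_pred n j)) ! k = \<beta> (cyc_pred n j)" using Or nj k2 b unfolding ring_output_def by simp
    moreover have "Out (cs!j) ! i = \<beta> (cyc_pred n j)" using Or j i2 False unfolding ring_output_def by simp
    ultimately show ?thesis using p j by simp
  qed
qed

lemma edge_cover_iff_ring_output:
  assumes Or: "ring_output G cs n Out \<beta>"
  shows "is_edge_cover G (ec_set G Out) \<longleftrightarrow> (\<forall>j<n. \<beta> (cyc_pred n j) \<or> \<beta> j)"
proof (intro iffI allI impI)
  fix j assume c: "is_edge_cover G (ec_set G Out)" and j: "j < n"
  have "cs!j \<in> verts G" using nth_cs_in_verts j by blast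
  then obtain e where "e \<in> ec_set G Out" "cs!j \<in> e" using c unfolding is_edge_cover_def by blast
  then obtain k where k: "k < n" "\<beta> k" "cs!j \<in> {cs!k, cs!(cyc_succ n k)}" using ec_set_ring_output[OF Or]
    by blast
  have "cyc_succ n k < n" using cyc_succ_less n_pos by auto
  then have "j = k \<or> j = cyc_succ n k" using k nth_cs_eq_iff j by auto
  then show "\<beta> (cyc_pred n j) \<or> \<beta> j" using k cyc_pred_succ by auto
next
  assume c: "\<forall>j<n. \<beta> (cyc_pred n j) \<or> \<beta> j"
  show "is_edge_cover G (ec_set G Out)"
    unfolding is_edge_cover_def
  proof (intro conjI ballI subsetI)
    fix e assume "e \<in> ec_set G Out"
    then obtain j where j: "j < n" "e = {cs!j, cs!(cyc_succ n j)}" using ec_set_ring_output[OF Or] by blast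
    have "cs!j \<in> verts G" using nth_cs_in_verts j by blast
    moreover have "cs!(cyc_succ n j) \<in> set (nbrs G (cs!j))" using nbrs_cs j by simp
    ultimately show "e \<in> edges G" unfolding edges_def using j by blast
  next
    fix v assume "v \<in> verts G"
    then obtain j where j: "j < n" "v = cs!j" using vert_cs by blast
    have nj: "cyc_pred n j < n" using cyc_pred_less n_pos by auto
    show "\<exists>e\<in>ec_set G Out. v \<in> e"
    proof (cases "\<beta> j")
      case True then show ?thesis using ec_set_ring_output[OF Or] j by blast
    next
      case False
      then have "\<beta> (cyc_pred n j)" using c j by blast
      then have "{cs!(cyc_pred n j), cs!(cyc_succ n (cyc_pred n j))} \<in> ec_set G Out"
        using ec_set_ring_output[OF Or] nj by blast
      then show ?thesis using j cyc_succ_pred by auto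
    qed
  qed
qed

definition port_succ :: "nat \<Rightarrow> nat" where
  "port_succ j = (SOME k. k < 2 \<and> nbrs G (cs!j) ! k = cs!(cyc_succ n j))"

lemma port_succ_spec: "j < n \<Longrightarrow> port_succ j < 2 \<and> nbrs G (cs!j) ! port_succ j = cs!(cyc_succ n j)"
  unfolding port_succ_def using port_exists[of j "cs!(cyc_succ n j)"]
    by (metis (mono_tags, lifting) insertI1 someI_ex)

lemma ring_output_of_encoding:
  assumes E: "ec_encoding_ok G Out"
  shows "ring_output G cs n Out (\<lambda>j. Out (cs!j) ! port_succ j)"
  unfolding ring_output_def
proof (intro allI impI conjI)
  fix j assume j: "j < n"
  have vj: "cs!j \<in> verts G" using nth_cs_in_verts j by blast
  then show "length (Out (cs!j)) = 2" using E nbrs_cs j unfolding ec_encoding_ok_def by simp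
  fix k assume k: "k < (2::nat)"
  show "Out (cs!j) ! k = (if nbrs G (cs!j) ! k = cs!(cyc_succ n j) then Out (cs!j) ! port_succ j
      else Out (cs!(cyc_pred n j)) ! port_succ (cyc_pred n j))"
  proof (cases "nbrs G (cs!j) ! k = cs!(cyc_succ n j)")
    case True
    have "k = port_succ j" using port_succ_spec[OF j] True nbrs_cs[OF j] k by (metis nth_eq_iff_index_eq)
    then show ?thesis using True by simp
  next
    case False
    then have p: "nbrs G (cs!j) ! k = cs!(cyc_pred n j)" using nbrs_cs_port j k by blast
    have pj: "cyc_pred n j < n" using cyc_pred_less n_pos by auto
    have u: "cs!(cyc_pred n j) \<in> verts G" using nth_cs_in_verts pj by blast
    have i: "port_succ (cyc_pred n j) < length (nbrs G (cs!(cyc_pred n j)))"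
      using port_succ_spec[OF pj] nbrs_cs[OF pj] by simp
    have v: "nbrs G (cs!(cyc_pred n j)) ! port_succ (cyc_pred n j) = cs!j"
      using port_succ_spec[OF pj] cyc_succ_pred[OF j] by simp
    have "Out (cs!(cyc_pred n j)) ! port_succ (cyc_pred n j) \<longleftrightarrow> Out (cs!j) ! k"
      using E u i v p k nbrs_cs[OF j] unfolding ec_encoding_ok_def by (metis)
    then show ?thesis using False by simp
  qed
qed

definition index_cs :: "nat \<Rightarrow> nat" where
  "index_cs v = the_inv_into {..<n} (\<lambda>j. cs!j) v"

lemma index_cs_nth: "j < n \<Longrightarrow> index_cs (cs!j) = j"
  unfolding index_cs_def using nth_cs_eq_iff by (intro the_inv_into_f_f inj_onI) auto

definition bit_output :: "(nat \<Rightarrow> bool) \<Rightarrow> assignment" where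
  "bit_output \<beta> v =
     map (\<lambda>w. if w = cs!(cyc_succ n (index_cs v)) then \<beta> (index_cs v) else \<beta> (cyc_pred n (index_cs v)))
       (nbrs G v)"

lemma ring_output_bit_output: "ring_output G cs n (bit_output \<beta>) \<beta>"
  unfolding ring_output_def bit_output_def using nbrs_cs index_cs_nth by auto

lemma OPT_min_ring_enum:
  assumes "\<forall>v\<in>verts G. I v = []"
  shows "OPT_min ec_feasible ec_size G I = int ((n + 1) div 2)"
proof -
  let ?Out = "bit_output even"
  have "\<forall>j<n. even (cyc_pred n j) \<or> even j" using even_cyc_pred_or_even by blast
  then have feasible: "ec_feasible (G, I, ?Out)"
    using assms ec_encoding_ok_ring_output[OF ring_output_bit_output]
      edge_cover_iff_ring_output[OF ring_output_bit_output] by simp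
  have size: "ec_size (G, I, ?Out) = int ((n + 1) div 2)"
    using card_ec_set_ring_output[OF ring_output_bit_output] card_even_below by simp
  have "(n + 1) div 2 \<le> card (ec_set G Out')" if "ec_feasible (G, I, Out')" for Out'
  proof -
    have "card (verts G) = n" using set_cs length_cs distinct_cs distinct_card by metis
    moreover have "finite (verts G)" using set_cs by (metis List.finite_set)
    ultimately have "n \<le> 2 * card (ec_set G Out')" using card_verts_le_edge_cover that by fastforce
    then show ?thesis by linarith
  qed
  then have "ec_size (G, I, ?Out) \<le> ec_size (G, I, Out')" if "ec_feasible (G, I, Out')" for Out'
    using that size by simp
  then show ?thesis using OPT_min_eqI[of ec_feasible G I ?Out ec_size] feasible size by simp
qed

end

definition cycle_graph :: "nat \<Rightarrow> pgraph" where
  "cycle_graph M = \<lparr>verts = {..<M}, nbrs = (\<lambda>i. [cyc_pred M i, cyc_succ M i])\<rparr>"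

lemma cycle_graph_simps [simp]:
  "verts (cycle_graph M) = {..<M}"
  "nbrs (cycle_graph M) i = [cyc_pred M i, cyc_succ M i]"
  unfolding cycle_graph_def by simp_all

lemma ring_enum_cycle_graph:
  assumes "M \<ge> 3"
  shows "ring_enum (cycle_graph M) [0..<M] M"
proof
  fix j assume "j < M"
  then have "cyc_pred M j \<noteq> cyc_succ M j" and "cyc_succ M j < M" and "cyc_pred M j < M"
    using cyc_succ_neq_pred[OF assms, of j] cyc_succ_less cyc_pred_less assms by auto
  then show "length (nbrs (cycle_graph M) ([0..<M] ! j)) = 2 \<and>
      distinct (nbrs (cycle_graph M) ([0..<M] ! j)) \<and>
      set (nbrs (cycle_graph M) ([0..<M] ! j)) = {[0..<M] ! cyc_succ M j, [0..<M] ! cyc_pred M j}"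
    using \<open>j < M\<close> by auto
qed (use assms in auto)

lemma cycle_graph_reach:
  assumes "u < M"
  shows "(u, (u + k) mod M) \<in> (adj_rel (cycle_graph M))\<^sup>*"
proof (induction k)
  case (Suc k)
  have "((u + k) mod M, cyc_succ M ((u + k) mod M)) \<in> adj_rel (cycle_graph M)"
    unfolding adj_rel_def using assms by simp
  moreover have "cyc_succ M ((u + k) mod M) = (u + Suc k) mod M"
    by (simp add: cyc_succ_mod)
  ultimately show ?case using Suc.IH by (metis rtrancl.rtrancl_into_rtrancl)
qed (use assms in simp)

lemma valid_graph_cycle_graph:
  assumes "M \<ge> 3"
  shows "valid_graph (cycle_graph M)"
proof -
  let ?G = "cycle_graph M"
  have simple: "distinct (nbrs ?G v) \<and> set (nbrs ?G v) \<subseteq> verts ?G \<and> v \<notin> set (nbrs ?G v)"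
    if "v \<in> verts ?G" for v
  proof -
    have "cyc_succ M v \<noteq> v" "cyc_pred M v \<noteq> v" "cyc_succ M v \<noteq> cyc_pred M v"
      using cyc_succ_neq cyc_pred_neq cyc_succ_neq_pred assms that by auto
    then show ?thesis using cyc_succ_less cyc_pred_less assms by auto
  qed
  have symmetric: "v \<in> set (nbrs ?G u) \<longleftrightarrow> u \<in> set (nbrs ?G v)"
    if "u \<in> verts ?G" "v \<in> verts ?G" for u v
    using that cyc_succ_pred cyc_pred_succ by auto
  have connected: "(u, v) \<in> (adj_rel ?G)\<^sup>*" if "u \<in> verts ?G" "v \<in> verts ?G" for u v
  proof -
    have "(u, (u + (v + M - u)) mod M) \<in> (adj_rel ?G)\<^sup>*"
      using cycle_graph_reach[of u M "v + M - u"] that(1) by simp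
    moreover have "(u + (v + M - u)) mod M = v" using that by simp
    ultimately show ?thesis by simp
  qed
  have "verts ?G \<noteq> {}" using assms by (simp add: lessThan_empty_iff)
  then show ?thesis unfolding valid_graph_def using simple symmetric connected by simp
qed

lemma sum_cyc_succ_reindex:
  fixes g :: "nat \<Rightarrow> 'a::comm_monoid_add"
  assumes "L > 0"
  shows "(\<Sum>i<L. g (cyc_succ L i)) = (\<Sum>i<L. g i)"
proof -
  have "inj_on (cyc_succ L) {..<L}"
    by (rule inj_onI) (metis cyc_pred_succ lessThan_iff)
  moreover have "cyc_succ L ` {..<L} \<subseteq> {..<L}" using cyc_succ_less assms by auto
  ultimately have "bij_betw (cyc_succ L) {..<L} {..<L}"
    by (simp add: bij_betw_def endo_inj_surj)
  then show ?thesis by (rule sum.reindex_bij_betw)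
qed

lemma cycle_graph_step_dvd:
  assumes "M \<ge> 3" and "w \<in> set (nbrs (cycle_graph M) v)"
  shows "int M dvd int w - int v - 1 \<or> int M dvd int w - int v + 1"
proof -
  have mod_dvd: "int M dvd int (a mod M) - int a" for a
    by (metis mod_mod_trivial mod_eq_dvd_iff of_nat_mod)
  consider "w = (v + 1) mod M" | "w = (v + M - 1) mod M"
    using assms(2) by (auto simp: cyc_succ_def cyc_pred_def)
  then show ?thesis
  proof cases
    case 1
    then show ?thesis using mod_dvd[of "v + 1"] by (simp add: algebra_simps)
  next
    case 2
    have "int w - int v + 1 = (int ((v + M - 1) mod M) - int (v + M - 1)) + int M"
      using 2 assms(1) by simp
    then show ?thesis using mod_dvd[of "v + M - 1"] by (metis dvd_add dvd_refl)
  qed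
qed

text \<open>Along a closed walk of length L < M in the M-cycle every step changes the node by \<plusminus>1 modulo M.
  The signs sum to a multiple of M of absolute value at most L, hence to 0, so L is even.\<close>

lemma odd_cycle_length_cycle_graph:
  assumes M: "M \<ge> 3" and c: "is_cycle (cycle_graph M) cs" and odd_len: "odd (length cs)"
  shows "length cs \<ge> M"
proof (rule ccontr)
  assume "\<not> length cs \<ge> M"
  define L where "L = length cs"
  have "L > 0" "L < M" using c \<open>\<not> length cs \<ge> M\<close> unfolding is_cycle_def L_def by auto
  define s :: "nat \<Rightarrow> int" where
    "s i = (if int M dvd int (cs ! cyc_succ L i) - int (cs ! i) - 1 then 1 else -1)" for i
  have abs_s [simp]: "\<bar>s i\<bar> = 1" for i unfolding s_def by simp
  have step: "int M dvd int (cs ! cyc_succ L i) - int (cs ! i) - s i" if "i < L" for i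
  proof -
    have "cs ! cyc_succ L i \<in> set (nbrs (cycle_graph M) (cs ! i))"
      using c that unfolding is_cycle_def L_def cyc_succ_def by blast
    then show ?thesis using cycle_graph_step_dvd[OF M] unfolding s_def by fastforce
  qed
  have "(\<Sum>i<L. int (cs ! cyc_succ L i) - int (cs ! i) - s i) = - (\<Sum>i<L. s i)"
    using sum_cyc_succ_reindex[OF \<open>L > 0\<close>, of "\<lambda>i. int (cs ! i)"] by (simp add: sum_subtractf)
  moreover have "int M dvd (\<Sum>i<L. int (cs ! cyc_succ L i) - int (cs ! i) - s i)"
    using step by (intro dvd_sum) auto
  ultimately have "int M dvd (\<Sum>i<L. s i)" by simp
  moreover have "\<bar>\<Sum>i<L. s i\<bar> < int M"
  proof -
    have "\<bar>\<Sum>i<L. s i\<bar> \<le> (\<Sum>i<L. \<bar>s i\<bar>)" by (rule sum_abs)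
    also have "\<dots> = int L" by simp
    finally show ?thesis using \<open>L < M\<close> by simp
  qed
  ultimately have "(\<Sum>i<L. s i) = 0" by (metis dvd_imp_le_int abs_of_nat not_le)
  moreover have "odd (\<Sum>i<L. s i)"
  proof -
    have "odd (s i)" for i unfolding s_def by simp
    then have "{i \<in> {..<L}. odd (s i)} = {..<L}" by auto
    then show ?thesis using odd_len by (simp add: even_sum_iff L_def)
  qed
  ultimately show False by simp
qed

lemma odd_girth_ge_cycle_graph: "M \<ge> 3 \<Longrightarrow> m \<le> M \<Longrightarrow> odd_girth_ge (cycle_graph M) m"
  unfolding odd_girth_ge_def using odd_cycle_length_cycle_graph by (meson le_trans)

definition cycle_output :: "nat \<Rightarrow> (nat \<Rightarrow> bool) \<Rightarrow> assignment" where
  "cycle_output M \<beta> = (\<lambda>i. [\<beta> (cyc_pred M i), \<beta> i])"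

lemma ring_output_cycle_output: "M \<ge> 3 \<Longrightarrow> ring_output (cycle_graph M) [0..<M] M (cycle_output M \<beta>) \<beta>"
  unfolding ring_output_def cycle_output_def
proof (intro allI impI conjI)
  fix j k assume M: "M \<ge> 3" and j: "j < M" and k: "k < (2::nat)"
  have "cyc_succ M j < M" "cyc_pred M j < M" "cyc_pred M j \<noteq> cyc_succ M j"
    using cyc_succ_less cyc_pred_less cyc_succ_neq_pred[OF M j] M by auto
  then show "[\<beta> (cyc_pred M ([0..<M] ! j)), \<beta> ([0..<M] ! j)] ! k =
      (if nbrs (cycle_graph M) ([0..<M] ! j) ! k = [0..<M] ! cyc_succ M j then \<beta> j else \<beta> (cyc_pred M j))"
    using k j by (cases k) auto
qed auto

lemma ec_feasible_cycle_output:
  assumes "M \<ge> 3" and "\<forall>j<M. \<beta> (cyc_pred M j) \<or> \<beta> j"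
  shows "ec_feasible (cycle_graph M, \<lambda>_. [], cycle_output M \<beta>)"
proof -
  interpret ring_enum "cycle_graph M" "[0..<M]" M using ring_enum_cycle_graph assms(1) .
  have "ring_output (cycle_graph M) [0..<M] M (cycle_output M \<beta>) \<beta>"
    using ring_output_cycle_output assms(1) .
  then show ?thesis using ec_encoding_ok_ring_output edge_cover_iff_ring_output assms(2) by simp
qed

lemma ec_size_cycle_output:
  assumes "M \<ge> 3"
  shows "ec_size (cycle_graph M, \<lambda>_. [], cycle_output M \<beta>) = int (card {j. j < M \<and> \<beta> j})"
proof -
  interpret ring_enum "cycle_graph M" "[0..<M]" M using ring_enum_cycle_graph assms .
  show ?thesis using card_ec_set_ring_output[OF ring_output_cycle_output[OF assms]] by simp
qed

lemma OPT_min_cycle_graph: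
  assumes "M \<ge> 3"
  shows "OPT_min ec_feasible ec_size (cycle_graph M) (\<lambda>_. []) = int ((M + 1) div 2)"
proof -
  interpret ring_enum "cycle_graph M" "[0..<M]" M using ring_enum_cycle_graph assms .
  show ?thesis by (rule OPT_min_ring_enum) simp
qed

lemma accepts_cycle_graph_iff:
  "accepts ver (cycle_graph M, \<lambda>_. [], cycle_output M (\<lambda>i. snd (f i))) (\<lambda>i. fst (f i)) \<longleftrightarrow>
    (\<forall>i<M. ver [snd (f (cyc_pred M i)), snd (f i)] (fst (f i))
              [fst (f (cyc_pred M i)), fst (f (cyc_succ M i))])"
  unfolding accepts_def cycle_output_def by (simp add: Ball_def)

section \<open>Cutting and pumping accepted cycles\<close>

text \<open>A cyclic word f of length d describes the cycle graph on d nodes with an edge set and labels: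
  f i = (label of node i, whether the edge {i, i + 1} is chosen).\<close>

type_synonym cword = "nat \<Rightarrow> bool list \<times> bool"
type_synonym node_view = "(bool list \<times> bool) \<times> (bool list \<times> bool) \<times> bool list"

definition local_view :: "cword \<Rightarrow> nat \<Rightarrow> nat \<Rightarrow> node_view" where
  "local_view f d i = (f (cyc_pred d i), f i, fst (f (cyc_succ d i)))"

fun view_ok :: "verifier \<Rightarrow> nat \<Rightarrow> node_view \<Rightarrow> bool" where
  "view_ok ver r (a, b, l) \<longleftrightarrow>
     ver [snd a, snd b] (fst b) [fst a, l] \<and> (snd a \<or> snd b) \<and> length (fst a) \<le> r \<and> length (fst b) \<le> r"

fun view_double :: "node_view \<Rightarrow> bool" where
  "view_double (a, b, l) \<longleftrightarrow> snd a \<and> snd b"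

definition accepted_word :: "verifier \<Rightarrow> nat \<Rightarrow> cword \<Rightarrow> nat \<Rightarrow> bool" where
  "accepted_word ver r f d \<longleftrightarrow>
     d > 0 \<and> (\<forall>i<d. view_ok ver r (local_view f d i)) \<and> (\<exists>i<d. view_double (local_view f d i))"

text \<open>If nodes x < y see the same predecessor and carry the same label, then closing up either of the
  arcs [x, y) and [y, x) into a cycle leaves every view unchanged.\<close>

lemma local_view_excise_inner:
  assumes xy: "x < y" "y < d" and st: "f (cyc_pred d x) = f (cyc_pred d y)" "fst (f x) = fst (f y)"
    and k: "k < y - x"
  shows "local_view (\<lambda>k. f (x + k)) (y - x) k = local_view f d (x + k)"
proof -
  have pred_view: "f (x + cyc_pred (y - x) k) = f (cyc_pred d (x + k))"
  proof (cases "k = 0")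
    case True
    then have "x + cyc_pred (y - x) k = y - 1" using cyc_pred_eq[OF k] xy by simp
    moreover have "cyc_pred d y = y - 1" using cyc_pred_eq[of y d] xy by simp
    ultimately show ?thesis using True st by simp
  next
    case False
    then have "x + cyc_pred (y - x) k = x + k - 1" using cyc_pred_eq[OF k] by simp
    moreover have "cyc_pred d (x + k) = x + k - 1" using cyc_pred_eq[of "x + k" d] xy k False by simp
    ultimately show ?thesis by simp
  qed
  have succ_view: "fst (f (x + cyc_succ (y - x) k)) = fst (f (cyc_succ d (x + k)))"
  proof (cases "k + 1 = y - x")
    case True
    then have "x + cyc_succ (y - x) k = x" using cyc_succ_eq[OF k] by simp
    moreover have "cyc_succ d (x + k) = y" unfolding cyc_succ_def using xy True by simp
    ultimately show ?thesis using st by simp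
  next
    case False
    then have "x + cyc_succ (y - x) k = x + k + 1" using cyc_succ_eq[OF k] by simp
    moreover have "cyc_succ d (x + k) = x + k + 1" unfolding cyc_succ_def using xy k False by simp
    ultimately show ?thesis by simp
  qed
  show ?thesis unfolding local_view_def using pred_view succ_view by simp
qed

lemma local_view_excise_outer:
  assumes xy: "x < y" "y < d" and st: "f (cyc_pred d x) = f (cyc_pred d y)" "fst (f x) = fst (f y)"
    and k: "k < d - y + x"
  shows "local_view (\<lambda>k. f ((y + k) mod d)) (d - y + x) k = local_view f d ((y + k) mod d)"
proof -
  have d0: "d > 0" using xy by simp
  have pred_view: "f ((y + cyc_pred (d - y + x) k) mod d) = f (cyc_pred d ((y + k) mod d))"
  proof (cases "k = 0")
    case True
    then have "(y + cyc_pred (d - y + x) k) mod d = (d + x - 1) mod d" using cyc_pred_eq[OF k] xy by simp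
    moreover have "cyc_pred d x = (d + x - 1) mod d" unfolding cyc_pred_def by (simp add: add.commute)
    moreover have "(y + k) mod d = y" using True xy by simp
    ultimately show ?thesis using st by simp
  next
    case False
    then have "(y + cyc_pred (d - y + x) k) mod d = (y + k - 1) mod d" using cyc_pred_eq[OF k] by simp
    moreover have "cyc_pred d ((y + k) mod d) = (y + k + d - 1) mod d" using cyc_pred_mod d0 by simp
    moreover have "(y + k + d - 1) mod d = (y + k - 1) mod d"
    proof -
      have "y + k + d - 1 = (y + k - 1) + d" using False by simp
      then show ?thesis by simp
    qed
    ultimately show ?thesis by simp
  qed
  have succ_view: "fst (f ((y + cyc_succ (d - y + x) k) mod d)) = fst (f (cyc_succ d ((y + k) mod d)))"
  proof (cases "k + 1 = d - y + x")
    case True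
    then have "(y + cyc_succ (d - y + x) k) mod d = y" using cyc_succ_eq[OF k] xy by simp
    moreover have "cyc_succ d ((y + k) mod d) = x"
    proof -
      have "cyc_succ d ((y + k) mod d) = (y + k + 1) mod d" by (rule cyc_succ_mod)
      also have "y + k + 1 = d + x" using True xy by simp
      finally show ?thesis using xy by simp
    qed
    ultimately show ?thesis using st by simp
  next
    case False
    then have "(y + cyc_succ (d - y + x) k) mod d = (y + k + 1) mod d" using cyc_succ_eq[OF k] by simp
    moreover have "cyc_succ d ((y + k) mod d) = (y + k + 1) mod d" by (rule cyc_succ_mod)
    ultimately show ?thesis by simp
  qed
  show ?thesis unfolding local_view_def using pred_view succ_view by simp
qed

lemma accepted_word_excise:
  assumes acc: "accepted_word ver r f d" and xy: "x < y" "y < d"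
    and st: "f (cyc_pred d x) = f (cyc_pred d y)" "fst (f x) = fst (f y)"
  shows "accepted_word ver r (\<lambda>k. f (x + k)) (y - x) \<or>
      accepted_word ver r (\<lambda>k. f ((y + k) mod d)) (d - y + x)"
proof -
  have ok: "\<forall>i<d. view_ok ver r (local_view f d i)" using acc unfolding accepted_word_def by simp
  obtain i where i: "i < d" "view_double (local_view f d i)" using acc unfolding accepted_word_def by blast
  have ok1: "\<forall>k<y - x. view_ok ver r (local_view (\<lambda>k. f (x + k)) (y - x) k)"
    using local_view_excise_inner[OF xy st] ok xy by simp
  have ok2: "\<forall>k<d - y + x. view_ok ver r (local_view (\<lambda>k. f ((y + k) mod d)) (d - y + x) k)"
    using local_view_excise_outer[OF xy st] ok xy by simp
  show ?thesis
  proof (cases "x \<le> i \<and> i < y")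
    case True
    have ix: "i - x < y - x" using True by arith
    have "local_view (\<lambda>k. f (x + k)) (y - x) (i - x) = local_view f d i"
      using local_view_excise_inner[OF xy st ix] True by simp
    then have "view_double (local_view (\<lambda>k. f (x + k)) (y - x) (i - x))" using i by simp
    then have "accepted_word ver r (\<lambda>k. f (x + k)) (y - x)" unfolding accepted_word_def using ok1 xy True
      by (metis diff_less_mono zero_less_diff)
    then show ?thesis by simp
  next
    case False
    define k where "k = (if i \<ge> y then i - y else i + d - y)"
    have k: "k < d - y + x" using False i xy unfolding k_def by auto
    have "(y + k) mod d = i" using False i xy unfolding k_def by auto
    then have "view_double (local_view (\<lambda>k. f ((y + k) mod d)) (d - y + x) k)"
      using local_view_excise_outer[OF xy st k] i by simp
    then have "accepted_word ver r (\<lambda>k. f ((y + k) mod d)) (d - y + x)" unfolding accepted_word_def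
      using ok2 k by auto
    then show ?thesis by simp
  qed
qed

definition short_lists :: "nat \<Rightarrow> bool list set" where "short_lists r = {l. length l \<le> r}"

lemma card_short_lists: "finite (short_lists r) \<and> card (short_lists r) \<le> 2 ^ (r + 1)"
proof -
  have e: "short_lists r = {xs. set xs \<subseteq> (UNIV::bool set) \<and> length xs \<le> r}"
    unfolding short_lists_def by simp
  have f: "finite (short_lists r)" unfolding e by (rule finite_lists_length_le) simp
  have c: "card (short_lists r) = (\<Sum>i\<le>r. 2 ^ i)" unfolding e by (subst card_lists_length_le) simp_all
  have "(\<Sum>i\<le>r. (2::nat) ^ i) < 2 ^ (r + 1)" by (induction r) auto
  then show ?thesis using f c by simp
qed

definition node_states :: "nat \<Rightarrow> ((bool list \<times> bool) \<times> bool list) set" where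
  "node_states r = (short_lists r \<times> UNIV) \<times> short_lists r"

lemma card_node_states: "finite (node_states r) \<and> card (node_states r) \<le> 2 ^ (2 * r + 3)"
proof -
  have f: "finite (node_states r)" unfolding node_states_def using card_short_lists by simp
  have "card (node_states r) = card (short_lists r) * 2 * card (short_lists r)" unfolding node_states_def
    by (simp add: card_cartesian_product)
  also have "\<dots> \<le> 2 ^ (r + 1) * 2 * 2 ^ (r + 1)" using card_short_lists by (intro mult_mono) auto
  also have "\<dots> = 2 ^ (2 * r + 3)"
  proof -
    have e: "2 * r + 3 = (r + 1) + 1 + (r + 1)" by simp
    show ?thesis unfolding e power_add by simp
  qed
  finally show ?thesis using f by simp
qed

lemma accepted_word_repeated_state:
  assumes acc: "accepted_word ver r f d" and "card (node_states r) < d"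
  obtains x y where "x < y" "y < d" "f (cyc_pred d x) = f (cyc_pred d y)" "fst (f x) = fst (f y)"
proof -
  define st where "st i = (f (cyc_pred d i), fst (f i))" for i
  have "st ` {..<d} \<subseteq> node_states r"
  proof
    fix z assume "z \<in> st ` {..<d}"
    then obtain i where i: "i < d" "z = st i" by auto
    have "view_ok ver r (local_view f d i)" using acc i unfolding accepted_word_def by blast
    then show "z \<in> node_states r"
      unfolding node_states_def short_lists_def st_def local_view_def i by (cases "f (cyc_pred d i)") auto
  qed
  then have "card (st ` {..<d}) < d" using card_node_states assms(2) by (meson card_mono le_less_trans)
  then have "\<not> inj_on st {..<d}" by (metis card_image card_lessThan less_irrefl)
  then obtain a b where "a < d" "b < d" "a \<noteq> b" "st a = st b" unfolding inj_on_def by auto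
  then show thesis using that[of "min a b" "max a b"] unfolding st_def by (auto simp: min_def max_def)
qed

lemma accepted_word_shrink:
  "accepted_word ver r f d \<Longrightarrow> \<exists>g d'. accepted_word ver r g d' \<and> d' \<le> card (node_states r)"
proof (induction d arbitrary: f rule: less_induct)
  case (less d)
  show ?case
  proof (cases "d \<le> card (node_states r)")
    case False
    then obtain x y where xy: "x < y" "y < d"
      and st: "f (cyc_pred d x) = f (cyc_pred d y)" "fst (f x) = fst (f y)"
      using accepted_word_repeated_state less.prems by (metis not_le)
    moreover have "y - x < d" "d - y + x < d" using xy by auto
    ultimately show ?thesis using accepted_word_excise[OF less.prems xy st] less.IH by blast
  qed (use less.prems in blast)
qed

lemma local_view_periodic:
  assumes d: "d > 0" and t: "t > 0"
  shows "local_view (\<lambda>i. g (i mod d)) (d * t) i = local_view g d (i mod d)"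
proof -
  let ?M = "d * t"
  have pred_mod: "(cyc_pred ?M i) mod d = cyc_pred d (i mod d)"
  proof -
    have "(cyc_pred ?M i) mod d = (i + ?M - 1) mod d" unfolding cyc_pred_def by (simp add: mod_mod_cancel)
    also have "i + ?M - 1 = (i + d - 1) + d * (t - 1)"
    proof -
      have "d * t = d + d * (t - 1)" using t by (metis Suc_diff_1 mult_Suc_right)
      then show ?thesis using d by simp
    qed
    also have "((i + d - 1) + d * (t - 1)) mod d = (i + d - 1) mod d" by simp
    also have "\<dots> = cyc_pred d (i mod d)" using cyc_pred_mod[OF d] by simp
    finally show ?thesis .
  qed
  have succ_mod: "(cyc_succ ?M i) mod d = cyc_succ d (i mod d)"
    unfolding cyc_succ_mod unfolding cyc_succ_def by (simp add: mod_mod_cancel)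
  show ?thesis unfolding local_view_def using pred_mod succ_mod by simp
qed

lemma view_ok_local_view:
  "view_ok ver r (local_view f d i) \<longleftrightarrow>
    ver [snd (f (cyc_pred d i)), snd (f i)] (fst (f i)) [fst (f (cyc_pred d i)), fst (f (cyc_succ d i))] \<and>
    (snd (f (cyc_pred d i)) \<or> snd (f i)) \<and> length (fst (f (cyc_pred d i))) \<le> r \<and> length (fst (f i)) \<le> r"
  unfolding local_view_def by (cases "f (cyc_pred d i)", cases "f i") simp

lemma view_double_local_view:
  "view_double (local_view f d i) \<longleftrightarrow> snd (f (cyc_pred d i)) \<and> snd (f i)"
  unfolding local_view_def by (cases "f (cyc_pred d i)", cases "f i") simp

section \<open>Approximate schemes on odd rings need long labels\<close>

lemma accepted_word_of_APLS_yes: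
  assumes "\<kappa> \<ge> 1"
    and yes: "\<forall>x \<in> APLS_yes ec_feasible ec_size (\<lambda>G. odd_girth_ge G (2 * \<kappa> + 1)).
      \<exists>L. (\<forall>v \<in> verts (fst x). length (L v) \<le> r) \<and> accepts ver x L"
  obtains f where "accepted_word ver r f (2 * \<kappa> + 1)"
proof -
  define N where "N = 2 * \<kappa> + 1"
  have "N \<ge> 3" using assms(1) N_def by simp
  have cover: "\<forall>j<N. even (cyc_pred N j) \<or> even j" using even_cyc_pred_or_even by blast
  let ?x = "(cycle_graph N, \<lambda>_. [], cycle_output N even)"
  have "ec_size ?x = OPT_min ec_feasible ec_size (cycle_graph N) (\<lambda>_. [])"
    using ec_size_cycle_output[OF \<open>N \<ge> 3\<close>] OPT_min_cycle_graph[OF \<open>N \<ge> 3\<close>] card_even_below by simp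
  then have "?x \<in> APLS_yes ec_feasible ec_size (\<lambda>G. odd_girth_ge G (2 * \<kappa> + 1))"
    unfolding APLS_yes_def APLS_universe_def N_def[symmetric]
    using ec_feasible_cycle_output[OF \<open>N \<ge> 3\<close> cover] valid_graph_cycle_graph[OF \<open>N \<ge> 3\<close>]
      odd_girth_ge_cycle_graph[OF \<open>N \<ge> 3\<close>] by auto
  then obtain L where short: "\<forall>v < N. length (L v) \<le> r" and acc: "accepts ver ?x L"
    using yes by fastforce
  define f where "f i = (L i, even i)" for i
  have "(\<lambda>i. snd (f i)) = even" "(\<lambda>i. fst (f i)) = L" unfolding f_def by auto
  then have "\<forall>i<N. ver [snd (f (cyc_pred N i)), snd (f i)] (fst (f i))
      [fst (f (cyc_pred N i)), fst (f (cyc_succ N i))]"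
    using acc accepts_cycle_graph_iff[of ver N f] by simp
  then have "\<forall>i<N. view_ok ver r (local_view f N i)"
    using cover short cyc_pred_less[of N] \<open>N \<ge> 3\<close> by (simp add: view_ok_local_view f_def)
  moreover have "view_double (local_view f N 0)"
    unfolding view_double_local_view f_def cyc_pred_def N_def by simp
  moreover have "0 < N" using \<open>N \<ge> 3\<close> by simp
  ultimately have "accepted_word ver r f N" unfolding accepted_word_def by blast
  then show thesis using that N_def by blast
qed

lemma approximation_ratio_exceeded:
  fixes M K S \<kappa> :: nat
  assumes "M + K \<le> 2 * S" and "M < \<kappa> * K"
  shows "(real \<kappa> + 1) / real \<kappa> * (real M / 2) < real S"
proof -
  have "\<kappa> > 0" using assms(2) by (cases \<kappa>) auto
  have "(real \<kappa> + 1) * real M < real \<kappa> * (real M + real K)"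
    using assms(2) by (simp add: algebra_simps flip: of_nat_mult)
  also have "\<dots> \<le> real \<kappa> * (2 * real S)"
    using assms(1) by (intro mult_left_mono) (simp_all flip: of_nat_add of_nat_mult)
  finally show ?thesis using \<open>\<kappa> > 0\<close> by (simp add: field_simps)
qed

lemma accepted_word_pump:
  assumes acc: "accepted_word ver r g d" and "t > 0" and "d * t \<ge> 3"
  defines "h \<equiv> \<lambda>i. g (i mod d)" and "M \<equiv> d * t"
  shows "accepts ver (cycle_graph M, \<lambda>_. [], cycle_output M (\<lambda>i. snd (h i))) (\<lambda>i. fst (h i))"
    and "ec_feasible (cycle_graph M, \<lambda>_. [], cycle_output M (\<lambda>i. snd (h i)))"
    and "M + t \<le> 2 * card {j. j < M \<and> snd (h j)}"
proof -
  have "d > 0" using acc unfolding accepted_word_def by simp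
  have "M \<ge> 3" using assms(3) unfolding M_def .
  have views: "local_view h M i = local_view g d (i mod d)" for i
    unfolding h_def M_def using local_view_periodic[OF \<open>d > 0\<close> \<open>t > 0\<close>] by blast
  then have ok: "view_ok ver r (local_view h M i)" for i
    using acc \<open>d > 0\<close> unfolding accepted_word_def by simp
  then have cover: "\<forall>j<M. snd (h (cyc_pred M j)) \<or> snd (h j)"
    by (simp add: view_ok_local_view)
  show "accepts ver (cycle_graph M, \<lambda>_. [], cycle_output M (\<lambda>i. snd (h i))) (\<lambda>i. fst (h i))"
    using ok accepts_cycle_graph_iff[of ver M h] by (simp add: view_ok_local_view)
  show "ec_feasible (cycle_graph M, \<lambda>_. [], cycle_output M (\<lambda>i. snd (h i)))"
    using ec_feasible_cycle_output[OF \<open>M \<ge> 3\<close> cover] .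
  obtain i0 where "i0 < d" "view_double (local_view g d i0)" using acc unfolding accepted_word_def by blast
  have doubles: "(\<lambda>s. i0 + s * d) ` {..<t} \<subseteq> {j. j < M \<and> snd (h j) \<and> snd (h (cyc_pred M j))}"
  proof
    fix j assume "j \<in> (\<lambda>s. i0 + s * d) ` {..<t}"
    then obtain s where s: "s < t" "j = i0 + s * d" by auto
    have "i0 + s * d < (s + 1) * d" using \<open>i0 < d\<close> by simp
    also have "\<dots> \<le> t * d" using s by (intro mult_right_mono) auto
    also have "\<dots> = M" unfolding M_def by simp
    finally have "j < M" using s by simp
    moreover have "view_double (local_view h M j)"
      using views \<open>view_double (local_view g d i0)\<close> \<open>i0 < d\<close> s by simp
    ultimately show "j \<in> {j. j < M \<and> snd (h j) \<and> snd (h (cyc_pred M j))}"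
      by (simp add: view_double_local_view)
  qed
  have "inj_on (\<lambda>s. i0 + s * d) {..<t}" using \<open>d > 0\<close> by (intro inj_onI) simp
  then have "t = card ((\<lambda>s. i0 + s * d) ` {..<t})" by (simp add: card_image)
  also have "\<dots> \<le> card {j. j < M \<and> snd (h j) \<and> snd (h (cyc_pred M j))}"
    using doubles by (intro card_mono) auto
  finally show "M + t \<le> 2 * card {j. j < M \<and> snd (h j)}"
    using card_ones_eq[of M "\<lambda>i. snd (h i)"] cover card_ones_plus_zeros[of M "\<lambda>i. snd (h i)"] \<open>M \<ge> 3\<close>
    by simp
qed

lemma APLS_no_pumped_word:
  assumes "\<kappa> \<ge> 1" and acc: "accepted_word ver r g d" and "d < \<kappa>"
  obtains x L
  where "x \<in> APLS_no_min ec_feasible ec_size (\<lambda>G. odd_girth_ge G (2 * \<kappa> + 1)) ((real \<kappa> + 1) / real \<kappa>)"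
    and "accepts ver x L"
proof -
  have "d > 0" using acc unfolding accepted_word_def by simp
  define K where "K = 2 * (2 * \<kappa> + 1)"
  define M where "M = d * K"
  define \<beta> where "\<beta> i = snd (g (i mod d))" for i
  let ?x = "(cycle_graph M, \<lambda>_. [], cycle_output M \<beta>)"
  have "K > 0" "2 * \<kappa> + 1 \<le> K" unfolding K_def by simp_all
  moreover have "K \<le> M" unfolding M_def using \<open>d > 0\<close> by simp
  ultimately have "M \<ge> 3" "even M" "2 * \<kappa> + 1 \<le> M" unfolding K_def M_def using \<open>\<kappa> \<ge> 1\<close> by simp_all
  note pumped = accepted_word_pump[OF acc \<open>K > 0\<close>, folded M_def \<beta>_def, OF \<open>M \<ge> 3\<close>]
  have "M < \<kappa> * K" unfolding M_def using \<open>d < \<kappa>\<close> \<open>K > 0\<close> by simp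
  then have gap: "(real \<kappa> + 1) / real \<kappa> * (real M / 2) < real (card {j. j < M \<and> \<beta> j})"
    using approximation_ratio_exceeded pumped(3) by blast
  have opt: "real_of_int (OPT_min ec_feasible ec_size (cycle_graph M) (\<lambda>_. [])) = real M / 2"
    using OPT_min_cycle_graph[OF \<open>M \<ge> 3\<close>] \<open>even M\<close> by auto
  have "\<not> real_of_int (ec_size ?x) \<le> (real \<kappa> + 1) / real \<kappa> *
      real_of_int (OPT_min ec_feasible ec_size (cycle_graph M) (\<lambda>_. []))"
    unfolding opt ec_size_cycle_output[OF \<open>M \<ge> 3\<close>] using gap by simp
  then have
    "?x \<in> APLS_no_min ec_feasible ec_size (\<lambda>G. odd_girth_ge G (2 * \<kappa> + 1)) ((real \<kappa> + 1) / real \<kappa>)"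
    unfolding APLS_no_min_def APLS_universe_def
    using valid_graph_cycle_graph[OF \<open>M \<ge> 3\<close>] odd_girth_ge_cycle_graph[OF \<open>M \<ge> 3\<close>] pumped(2)
      \<open>2 * \<kappa> + 1 \<le> M\<close> by auto
  then show thesis using that pumped(1) by blast
qed

theorem no_APLS_large_kappa:
  assumes "\<kappa> \<ge> 1" and "2 ^ (2 * r + 3) < \<kappa>"
  shows "\<not> has_APLS_min ec_feasible ec_size (\<lambda>G. odd_girth_ge G (2 * \<kappa> + 1)) ((real \<kappa> + 1) / real \<kappa>) r"
proof
  assume "has_APLS_min ec_feasible ec_size (\<lambda>G. odd_girth_ge G (2 * \<kappa> + 1)) ((real \<kappa> + 1) / real \<kappa>) r"
  then obtain ver where
    yes: "\<forall>x \<in> APLS_yes ec_feasible ec_size (\<lambda>G. odd_girth_ge G (2 * \<kappa> + 1)).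
      \<exists>L. (\<forall>v \<in> verts (fst x). length (L v) \<le> r) \<and> accepts ver x L" and
    no: "\<forall>x \<in> APLS_no_min ec_feasible ec_size (\<lambda>G. odd_girth_ge G (2 * \<kappa> + 1)) ((real \<kappa> + 1) / real \<kappa>).
      \<forall>L. \<not> accepts ver x L"
    unfolding has_APLS_min_def has_GPLS_def by blast
  obtain f where "accepted_word ver r f (2 * \<kappa> + 1)"
    using accepted_word_of_APLS_yes[OF assms(1) yes] .
  then obtain g d where "accepted_word ver r g d" and "d \<le> card (node_states r)"
    using accepted_word_shrink by blast
  then have "d < \<kappa>" using card_node_states[of r] assms(2) by linarith
  then show False using APLS_no_pumped_word[OF assms(1) \<open>accepted_word ver r g d\<close>] no by blast
qed

section \<open>Words that identify their edges\<close>

locale edge_coding_word =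
  fixes n :: nat and W :: "nat \<Rightarrow> 'a"
  assumes word_len_pos: "n > 0"
    and adjacent_distinct: "p < n \<Longrightarrow> W p \<noteq> W (cyc_succ n p)"
    and skip_distinct: "p < n \<Longrightarrow> W (cyc_pred n p) \<noteq> W (cyc_succ n p)"
    and edge_pair_inj:
      "p < n \<Longrightarrow> q < n \<Longrightarrow> {W p, W (cyc_succ n p)} = {W q, W (cyc_succ n q)} \<Longrightarrow> p = q"
begin

text \<open>Node j of the n-cycle, labelled by lb, claims position p of W; its neighbours carry the letters
  next to p, in the orientation of W if fwd and reversed otherwise.\<close>

definition consistent_at :: "(nat \<Rightarrow> 'a) \<Rightarrow> nat \<Rightarrow> nat \<Rightarrow> bool \<Rightarrow> bool" where
  "consistent_at lb j p fwd \<longleftrightarrow> p < n \<and> lb j = W p \<and>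
     (fwd \<longrightarrow> lb (cyc_succ n j) = W (cyc_succ n p) \<and> lb (cyc_pred n j) = W (cyc_pred n p)) \<and>
     (\<not> fwd \<longrightarrow> lb (cyc_succ n j) = W (cyc_pred n p) \<and> lb (cyc_pred n j) = W (cyc_succ n p))"

end

text \<open>Claims that are consistent at every node fit together into a rotation or reflection of W.\<close>

locale consistent_labelling = edge_coding_word n W for n and W :: "nat \<Rightarrow> 'a" +
  fixes lb :: "nat \<Rightarrow> 'a" and pos :: "nat \<Rightarrow> nat" and ori :: "nat \<Rightarrow> bool"
  assumes consistent: "j < n \<Longrightarrow> consistent_at lb j (pos j) (ori j)"
begin

lemma pos_less: "j < n \<Longrightarrow> pos j < n"
  using consistent unfolding consistent_at_def by blast

lemma consistent_step_forward:
  assumes "j < n" and "ori j"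
  shows "ori (cyc_succ n j) \<and> pos (cyc_succ n j) = cyc_succ n (pos j)"
proof -
  let ?j' = "cyc_succ n j"
  have j': "?j' < n" and pred_succ_j: "cyc_pred n ?j' = j"
    using cyc_succ_less word_len_pos cyc_pred_succ assms(1) by auto
  have p: "pos j < n" "pos ?j' < n" "cyc_pred n (pos ?j') < n"
    using pos_less assms(1) j' cyc_pred_less word_len_pos by auto
  have Hj: "consistent_at lb j (pos j) (ori j)" and Hj': "consistent_at lb ?j' (pos ?j') (ori ?j')"
    using consistent assms(1) j' by auto
  have l: "lb j = W (pos j)" "lb ?j' = W (pos ?j')" "lb ?j' = W (cyc_succ n (pos j))"
    using Hj Hj' assms(2) unfolding consistent_at_def by auto
  have "ori ?j'"
  proof (rule ccontr)
    assume "\<not> ori ?j'"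
    then have "lb j = W (cyc_succ n (pos ?j'))" using Hj' pred_succ_j unfolding consistent_at_def by simp
    then have "{W (pos ?j'), W (cyc_succ n (pos ?j'))} = {W (pos j), W (cyc_succ n (pos j))}" using l
      by auto
    then have "pos ?j' = pos j" using edge_pair_inj p by blast
    then show False using adjacent_distinct[OF p(1)] l by simp
  qed
  moreover have "lb j = W (cyc_pred n (pos ?j'))" using Hj' pred_succ_j \<open>ori ?j'\<close>
    unfolding consistent_at_def by simp
  then have "{W (cyc_pred n (pos ?j')), W (cyc_succ n (cyc_pred n (pos ?j')))} =
      {W (pos j), W (cyc_succ n (pos j))}"
    using l cyc_succ_pred p by auto
  then have "cyc_pred n (pos ?j') = pos j" using edge_pair_inj p by blast
  then have "pos ?j' = cyc_succ n (pos j)" using cyc_succ_pred p by metis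
  ultimately show ?thesis by blast
qed

lemma consistent_step_backward:
  assumes "j < n" and "\<not> ori j"
  shows "\<not> ori (cyc_succ n j) \<and> pos (cyc_succ n j) = cyc_pred n (pos j)"
proof -
  let ?j' = "cyc_succ n j"
  have j': "?j' < n" and pred_succ_j: "cyc_pred n ?j' = j"
    using cyc_succ_less word_len_pos cyc_pred_succ assms(1) by auto
  have p: "pos j < n" "pos ?j' < n" "cyc_pred n (pos j) < n" "cyc_pred n (pos ?j') < n"
    using pos_less assms(1) j' cyc_pred_less word_len_pos by auto
  have Hj: "consistent_at lb j (pos j) (ori j)" and Hj': "consistent_at lb ?j' (pos ?j') (ori ?j')"
    using consistent assms(1) j' by auto
  have l: "lb j = W (pos j)" "lb ?j' = W (pos ?j')" "lb ?j' = W (cyc_pred n (pos j))"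
    using Hj Hj' assms(2) unfolding consistent_at_def by auto
  have "\<not> ori ?j'"
  proof
    assume "ori ?j'"
    then have "lb j = W (cyc_pred n (pos ?j'))" using Hj' pred_succ_j unfolding consistent_at_def by simp
    then have "{W (cyc_pred n (pos ?j')), W (cyc_succ n (cyc_pred n (pos ?j')))} =
        {W (cyc_pred n (pos j)), W (cyc_succ n (cyc_pred n (pos j)))}"
      using l cyc_succ_pred p by auto
    then have "cyc_pred n (pos ?j') = cyc_pred n (pos j)" using edge_pair_inj p by blast
    then have "pos ?j' = pos j" using cyc_succ_pred p by metis
    then show False using adjacent_distinct[of "cyc_pred n (pos j)"] l cyc_succ_pred p by simp
  qed
  moreover have "lb j = W (cyc_succ n (pos ?j'))" using Hj' pred_succ_j \<open>\<not> ori ?j'\<close>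
    unfolding consistent_at_def by simp
  then have "{W (pos ?j'), W (cyc_succ n (pos ?j'))} =
      {W (cyc_pred n (pos j)), W (cyc_succ n (cyc_pred n (pos j)))}"
    using l cyc_succ_pred p by auto
  then have "pos ?j' = cyc_pred n (pos j)" using edge_pair_inj p by blast
  ultimately show ?thesis by blast
qed

lemma orientation_const: "j < n \<Longrightarrow> ori j = ori 0"
proof (induction j)
  case (Suc j)
  then have "cyc_succ n j = Suc j" unfolding cyc_succ_def by simp
  then show ?case using Suc consistent_step_forward[of j] consistent_step_backward[of j] by auto
qed simp

text \<open>The position in W of the edge from node j to its successor.\<close>

definition edge_pos :: "nat \<Rightarrow> nat" where
  "edge_pos j = (if ori j then pos j else cyc_pred n (pos j))"

lemma edge_pos_less: "j < n \<Longrightarrow> edge_pos j < n"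
  unfolding edge_pos_def using pos_less cyc_pred_less word_len_pos by auto

lemma edge_pos_succ:
  assumes "j < n"
  shows "edge_pos (cyc_succ n j) = (if ori 0 then cyc_succ n (edge_pos j) else cyc_pred n (edge_pos j))"
proof (cases "ori j")
  case True
  then show ?thesis using consistent_step_forward[OF assms] orientation_const[OF assms]
    unfolding edge_pos_def by simp
next
  case False
  then show ?thesis using consistent_step_backward[OF assms] orientation_const[OF assms]
    unfolding edge_pos_def by simp
qed

lemma edge_pos_pred:
  assumes j: "j < n"
  shows "edge_pos (cyc_pred n j) = (if ori j then cyc_pred n (pos j) else pos j)"
proof -
  have pj: "cyc_pred n j < n" using cyc_pred_less word_len_pos by simp
  have es: "edge_pos j =
      (if ori j then cyc_succ n (edge_pos (cyc_pred n j)) else cyc_pred n (edge_pos (cyc_pred n j)))"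
    using edge_pos_succ[OF pj] cyc_succ_pred[OF j] orientation_const[OF j] by simp
  have el: "edge_pos (cyc_pred n j) < n" using edge_pos_less[OF pj] .
  show ?thesis
  proof (cases "ori j")
    case True
    then show ?thesis using es cyc_pred_succ el unfolding edge_pos_def by simp
  next
    case False
    then have "cyc_succ n (cyc_pred n (pos j)) = cyc_succ n (cyc_pred n (edge_pos (cyc_pred n j)))"
      using es unfolding edge_pos_def by simp
    then show ?thesis using False cyc_succ_pred el pos_less j by simp
  qed
qed

lemma edge_pos_formula:
  assumes "j < n"
  shows "if ori 0 then edge_pos j = (edge_pos 0 + j) mod n else (edge_pos j + j) mod n = edge_pos 0"
  using assms
proof (induction j)
  case (Suc j)
  then have "cyc_succ n j = Suc j" unfolding cyc_succ_def by simp
  moreover have "j < n" using Suc.prems by simp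
  ultimately have "edge_pos (Suc j) = (if ori 0 then cyc_succ n (edge_pos j) else cyc_pred n (edge_pos j))"
    using edge_pos_succ by metis
  then show ?case using Suc cyc_pred_add_Suc_mod[OF word_len_pos]
    by (auto simp: cyc_succ_def mod_Suc_eq)
qed (simp add: edge_pos_less)

lemma inj_on_edge_pos: "inj_on edge_pos {..<n}"
proof (rule inj_onI)
  fix j k assume "j \<in> {..<n}" "k \<in> {..<n}" and eq: "edge_pos j = edge_pos k"
  then have "j < n" "k < n" by auto
  then have "(edge_pos 0 + j) mod n = (edge_pos 0 + k) mod n \<or>
      (edge_pos j + j) mod n = (edge_pos j + k) mod n"
    using edge_pos_formula[of j] edge_pos_formula[of k] eq by (cases "ori 0") auto
  then show "j = k" using mod_add_left_cancel_less \<open>j < n\<close> \<open>k < n\<close> by blast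
qed

end

section \<open>An edge-identifying word over few letters\<close>

definition acode :: "nat \<Rightarrow> nat \<Rightarrow> nat" where
  "acode Q j = 2 * (j div Q) + j mod 2"

definition bcode :: "nat \<Rightarrow> nat \<Rightarrow> nat" where
  "bcode Q j = Q + j mod Q"

text \<open>A cyclic word of length 2k+1 over the alphabet {0..2Q}: position 2j carries acode Q j < Q,
  position 2j+1 carries bcode Q j \<in> [Q, 2Q), and position 2k carries 2Q. The letters of the edge
  {2j, 2j+1} are acode Q j and bcode Q j, those of {2j+1, 2j+2} are bcode Q j and acode Q (j+1);
  the two kinds of edges are told apart by comparing the parity bit of the acode with the parity of
  j mod Q (which is that of j, Q being even), and then j is recovered from j div Q (in the acode) and
  j mod Q (in the bcode). So an alphabet of size about sqrt(2k) suffices.\<close>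

definition code :: "nat \<Rightarrow> nat \<Rightarrow> nat \<Rightarrow> nat" where
  "code k Q p = (if p = 2 * k then 2 * Q else if even p then acode Q (p div 2) else bcode Q (p div 2))"

definition lo :: "nat \<Rightarrow> nat \<Rightarrow> nat \<Rightarrow> nat" where
  "lo k Q p = (if p = 2 * k then 0 else if p = 2 * k - 1 then bcode Q (k - 1)
               else if even p then acode Q (p div 2) else acode Q (p div 2 + 1))"

definition hi :: "nat \<Rightarrow> nat \<Rightarrow> nat \<Rightarrow> nat" where
  "hi k Q p = (if p \<ge> 2 * k - 1 then 2 * Q else bcode Q (p div 2))"

definition decode :: "nat \<Rightarrow> nat \<Rightarrow> nat \<Rightarrow> nat \<Rightarrow> nat" where
  "decode k Q l h =
     (if h = 2 * Q then (if l = 0 then 2 * k else 2 * k - 1)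
      else if l mod 2 = (h - Q) mod 2 then 2 * (Q * (l div 2) + (h - Q))
      else 2 * (Q * (l div 2) + (h - Q + 1) mod Q) - 1)"

locale pair_code =
  fixes k Q :: nat
  assumes k_pos: "k \<ge> 1" and Q_ge2: "Q \<ge> 2" and even_Q: "even Q" and k_le: "2 * k \<le> Q * Q"
begin

abbreviation "n \<equiv> 2 * k + 1"

lemma acode_less: "j < k \<Longrightarrow> acode Q j < Q"
proof -
  assume "j < k"
  obtain h where h: "Q = 2 * h" using even_Q by blast
  have "2 * j < Q * Q" using \<open>j < k\<close> k_le by linarith
  then have "j div Q < h" using h Q_ge2 by (simp add: div_less_iff_less_mult mult.commute)
  then show ?thesis unfolding acode_def h by linarith
qed

lemma bcode_bounds: "Q \<le> bcode Q j" "bcode Q j < 2 * Q"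
  unfolding bcode_def using Q_ge2 by simp_all

lemma code_top: "code k Q (2 * k) = 2 * Q"
  unfolding code_def by simp

lemma code_even: "j < k \<Longrightarrow> code k Q (2 * j) = acode Q j"
  unfolding code_def by simp

lemma code_odd: "j < k \<Longrightarrow> code k Q (2 * j + 1) = bcode Q j"
  unfolding code_def by simp

lemma code_last_odd: "code k Q (2 * k - 1) = bcode Q (k - 1)"
proof -
  have "2 * k - 1 = 2 * (k - 1) + 1" using k_pos by simp
  then show ?thesis using code_odd[of "k - 1"] k_pos by simp
qed

lemma position_cases:
  assumes "p < n"
  obtains (top) "p = 2 * k" | (last_odd) "p = 2 * k - 1"
    | (even) j where "p = 2 * j" "j < k" | (odd) j where "p = 2 * j + 1" "j + 1 < k"
proof -
  consider "p = 2 * k" | "p = 2 * k - 1" | "p < 2 * k - 1" using assms by linarith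
  then show ?thesis
  proof cases
    case 3
    show ?thesis
    proof (cases "even p")
      case True
      then obtain j where "p = 2 * j" by blast
      then show ?thesis using 3 that(3) by simp
    next
      case False
      then obtain j where "p = 2 * j + 1" using oddE by blast
      then show ?thesis using 3 that(4) by simp
    qed
  qed (use that in blast)+
qed

lemma code_less:
  assumes "p < n"
  shows "code k Q p < 2 * Q + 1"
  using assms
proof (cases rule: position_cases)
  case last_odd
  then show ?thesis using code_last_odd bcode_bounds(2)[of "k - 1"] by simp
next
  case (even j)
  then show ?thesis using code_even[of j] acode_less[of j] by simp
next
  case (odd j)
  then show ?thesis using code_odd[of j] bcode_bounds(2)[of j] by simp
qed (simp add: code_top)

lemma edge_letters:
  assumes "p < n"
  shows "{code k Q p, code k Q (cyc_succ n p)} = {lo k Q p, hi k Q p}"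
  using assms
proof (cases rule: position_cases)
  case top
  then have "cyc_succ n p = 2 * 0" unfolding cyc_succ_def by simp
  then show ?thesis using top code_top code_even[of 0] k_pos unfolding lo_def hi_def acode_def
    by (simp add: insert_commute)
next
  case last_odd
  then have "cyc_succ n p = 2 * k" unfolding cyc_succ_def using k_pos by simp
  moreover have "2 * k - 1 \<noteq> 2 * k" using k_pos by simp
  ultimately show ?thesis using last_odd code_top code_last_odd unfolding lo_def hi_def by simp
next
  case (even j)
  then have "cyc_succ n p = 2 * j + 1" unfolding cyc_succ_def by simp
  then show ?thesis using even code_even code_odd unfolding lo_def hi_def by auto
next
  case (odd j)
  then have "cyc_succ n p = 2 * (j + 1)" unfolding cyc_succ_def by simp
  then show ?thesis using odd code_even[of "j + 1"] code_odd[of j] unfolding lo_def hi_def by auto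
qed

lemma lo_less_hi:
  assumes "p < n"
  shows "lo k Q p < hi k Q p"
  using assms
proof (cases rule: position_cases)
  case last_odd
  then show ?thesis unfolding lo_def hi_def using bcode_bounds(2)[of "k - 1"] k_pos by simp
next
  case (even j)
  then show ?thesis unfolding lo_def hi_def using acode_less[of j] bcode_bounds[of j] by auto
next
  case (odd j)
  then show ?thesis unfolding lo_def hi_def using acode_less[of "j + 1"] bcode_bounds[of j] by auto
qed (use Q_ge2 in \<open>simp add: lo_def hi_def\<close>)

lemma acode_div2: "acode Q j div 2 = j div Q"
  unfolding acode_def by simp

lemma acode_mod2: "acode Q j mod 2 = j mod 2"
  unfolding acode_def by simp

lemma bcode_minus: "bcode Q j - Q = j mod Q"
  unfolding bcode_def by simp

lemma mod_Q_mod2: "j mod Q mod 2 = j mod 2"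
  using even_Q by (simp add: mod_mod_cancel)

lemma bcode_neq_top: "bcode Q j \<noteq> 2 * Q"
  using bcode_bounds(2) by (metis less_irrefl)

lemma decode_lo_hi:
  assumes "p < n"
  shows "decode k Q (lo k Q p) (hi k Q p) = p"
  using assms
proof (cases rule: position_cases)
  case last_odd
  have "lo k Q p \<noteq> 0" "hi k Q p = 2 * Q"
    using last_odd bcode_bounds(1)[of "k - 1"] Q_ge2 k_pos unfolding lo_def hi_def by auto
  then show ?thesis using last_odd unfolding decode_def by simp
next
  case (even j)
  then have "lo k Q p = acode Q j" "hi k Q p = bcode Q j" unfolding lo_def hi_def by auto
  moreover have "Q * (j div Q) + j mod Q = j" by simp
  ultimately show ?thesis
    using even unfolding decode_def
      by (simp add: bcode_neq_top acode_mod2 acode_div2 mod_Q_mod2 bcode_minus)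
next
  case (odd j)
  then have "lo k Q p = acode Q (j + 1)" "hi k Q p = bcode Q j" unfolding lo_def hi_def by auto
  moreover have "(j + 1) mod 2 \<noteq> j mod 2" by presburger
  moreover have "(j mod Q + 1) mod Q = (j + 1) mod Q" by (rule mod_add_left_eq)
  moreover have "Q * ((j + 1) div Q) + (j + 1) mod Q = j + 1" by simp
  ultimately show ?thesis
    using odd unfolding decode_def by (simp add: bcode_neq_top acode_mod2 acode_div2 mod_Q_mod2 bcode_minus)
qed (simp add: decode_def lo_def hi_def)

lemma acode_Suc_neq: "acode Q j \<noteq> acode Q (j + 1)"
proof
  assume "acode Q j = acode Q (j + 1)"
  then have "j mod 2 = (j + 1) mod 2" using acode_mod2[of j] acode_mod2[of "j + 1"] by simp
  then show False by presburger
qed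

lemma bcode_Suc_neq: "bcode Q j \<noteq> bcode Q (j + 1)"
proof
  assume "bcode Q j = bcode Q (j + 1)"
  then have "j mod Q = Suc j mod Q" unfolding bcode_def by simp
  moreover have "Suc j mod Q = (if Suc (j mod Q) = Q then 0 else Suc (j mod Q))" by (rule mod_Suc)
  ultimately show False using Q_ge2 by (auto split: if_splits)
qed

lemma code_adjacent_distinct: "p < n \<Longrightarrow> code k Q p \<noteq> code k Q (cyc_succ n p)"
  using edge_letters lo_less_hi by (metis insert_absorb2 doubleton_eq_iff less_irrefl)

lemma code_edge_pair_inj:
  assumes "p < n" "q < n"
    and "{code k Q p, code k Q (cyc_succ n p)} = {code k Q q, code k Q (cyc_succ n q)}"
  shows "p = q"
proof -
  have "{lo k Q p, hi k Q p} = {lo k Q q, hi k Q q}" using assms edge_letters by simp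
  then have "lo k Q p = lo k Q q \<and> hi k Q p = hi k Q q"
    using lo_less_hi[OF assms(1)] lo_less_hi[OF assms(2)] by (auto simp: doubleton_eq_iff)
  then show "p = q" using decode_lo_hi assms(1,2) by metis
qed

lemma code_skip_distinct:
  assumes "p < n"
  shows "code k Q (cyc_pred n p) \<noteq> code k Q (cyc_succ n p)"
proof -
  let ?q = "cyc_pred n p"
  have "?q < n" using cyc_pred_less by simp
  have succ_p: "cyc_succ n p = (?q + 2) mod n"
    using cyc_succ_pred[OF assms] cyc_succ_mod[of n "?q + 1"] unfolding cyc_succ_def by simp
  from \<open>?q < n\<close> show ?thesis
  proof (cases rule: position_cases)
    case top
    have "(2 * k + 2) mod n = (n + 1) mod n" by (simp add: add.commute)
    also have "\<dots> = 1 mod n" by (rule mod_add_self1)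
    also have "\<dots> = 2 * 0 + 1" using k_pos by simp
    finally have "cyc_succ n p = 2 * 0 + 1" using succ_p top by simp
    then show ?thesis using top code_top code_odd[of 0] bcode_neq_top[of 0, symmetric] k_pos by simp
  next
    case last_odd
    then have "cyc_succ n p = 2 * 0" using succ_p k_pos by simp
    then show ?thesis using last_odd code_last_odd code_even[of 0] bcode_bounds(1)[of "k - 1"] Q_ge2 k_pos
      unfolding acode_def by simp
  next
    case (even j)
    show ?thesis
    proof (cases "j + 1 = k")
      case True
      then have "cyc_succ n p = 2 * k" using succ_p even by simp
      then show ?thesis using even code_even code_top acode_less[of j] by simp
    next
      case False
      then have "cyc_succ n p = 2 * (j + 1)" using succ_p even by simp
      moreover have "acode Q j \<noteq> acode Q (j + 1)" by (rule acode_Suc_neq)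
      ultimately show ?thesis using even False code_even[of j] code_even[of "j + 1"] by simp
    qed
  next
    case (odd j)
    then have "cyc_succ n p = 2 * (j + 1) + 1" using succ_p by simp
    moreover have "bcode Q j \<noteq> bcode Q (j + 1)" by (rule bcode_Suc_neq)
    ultimately show ?thesis using odd code_odd[of j] code_odd[of "j + 1"] by simp
  qed
qed

end

section \<open>A proof labeling scheme for odd rings\<close>

lemma (in ring_enum) ports_cs:
  assumes "j < n"
  obtains ks kp where "ks < 2" "kp < 2" "ks \<noteq> kp"
    "nbrs G (cs!j) ! ks = cs!(cyc_succ n j)" "nbrs G (cs!j) ! kp = cs!(cyc_pred n j)"
proof -
  obtain ks where "ks < 2" "nbrs G (cs!j) ! ks = cs!(cyc_succ n j)" using port_exists[OF assms] by blast
  moreover obtain kp where "kp < 2" "nbrs G (cs!j) ! kp = cs!(cyc_pred n j)" using port_exists[OF assms]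
    by blast
  moreover have "ks \<noteq> kp" using calculation nth_cs_succ_neq_pred[OF assms] by auto
  ultimately show thesis using that by blast
qed

text \<open>Verifier built from a cyclic word W: a node claiming position p checks that its two neighbours
  claim p + 1 and p - 1, and that the edge towards the neighbour claiming q + 1 from q is in the cover
  exactly if q is even. For odd n this certifies the optimal cover {{q, q + 1} | q even}.\<close>

definition word_verifier :: "nat \<Rightarrow> (nat \<Rightarrow> bool list) \<Rightarrow> verifier" where
  "word_verifier n W S l N \<longleftrightarrow> length S = 2 \<and> length N = 2 \<and> N ! 0 \<noteq> N ! 1 \<and>
     (\<exists>p<n. l = W p \<and> (\<forall>i<2. (N ! i = W (cyc_succ n p) \<and> S ! i = even p) \<or>
                              (N ! i = W (cyc_pred n p) \<and> S ! i = even (cyc_pred n p))))"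

lemma (in ring_enum) word_verifier_local:
  assumes W: "edge_coding_word n W" and j: "j < n"
    and V: "word_verifier n W (Out (cs!j)) (L (cs!j)) (map L (nbrs G (cs!j)))"
  obtains p fwd where "edge_coding_word.consistent_at n W (\<lambda>j. L (cs!j)) j p fwd"
    and "length (Out (cs!j)) = 2"
    and "\<And>i. i < 2 \<Longrightarrow> Out (cs!j) ! i = (if nbrs G (cs!j) ! i = cs!(cyc_succ n j)
      then even (if fwd then p else cyc_pred n p) else even (if fwd then cyc_pred n p else p))"
proof -
  interpret edge_coding_word n W by (rule W)
  let ?v = "cs!j" and ?N = "map L (nbrs G (cs!j))"
  let ?Ls = "L (cs!(cyc_succ n j))" and ?Lp = "L (cs!(cyc_pred n j))"
  obtain p where p: "p < n" "L ?v = W p" and len: "length (Out ?v) = 2" and neq: "?N ! 0 \<noteq> ?N ! 1"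
    and port: "\<And>i. i < 2 \<Longrightarrow> (?N ! i = W (cyc_succ n p) \<and> Out ?v ! i = even p) \<or>
      (?N ! i = W (cyc_pred n p) \<and> Out ?v ! i = even (cyc_pred n p))"
    using V unfolding word_verifier_def by blast
  obtain ks kp where ports: "ks < 2" "kp < 2" "ks \<noteq> kp"
    "nbrs G ?v ! ks = cs!(cyc_succ n j)" "nbrs G ?v ! kp = cs!(cyc_pred n j)"
    using ports_cs[OF j] .
  have "length (nbrs G ?v) = 2" using nbrs_cs[OF j] by simp
  then have Ns: "?N ! ks = ?Ls" and Np: "?N ! kp = ?Lp" using ports by auto
  have ks_kp: "(ks = 0 \<and> kp = 1) \<or> (ks = 1 \<and> kp = 0)" using ports(1-3) by auto
  then have "?Ls \<noteq> ?Lp" using neq Ns Np by auto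
  define fwd where "fwd \<longleftrightarrow> ?Ls = W (cyc_succ n p)"
  have skip: "W (cyc_pred n p) \<noteq> W (cyc_succ n p)" using skip_distinct[OF p(1)] .
  have succ_port: "?Ls = (if fwd then W (cyc_succ n p) else W (cyc_pred n p)) \<and>
      Out ?v ! ks = even (if fwd then p else cyc_pred n p)"
    using port[OF ports(1)] Ns skip unfolding fwd_def by auto
  have pred_port: "?Lp = (if fwd then W (cyc_pred n p) else W (cyc_succ n p)) \<and>
      Out ?v ! kp = even (if fwd then cyc_pred n p else p)"
    using port[OF ports(2)] Np succ_port \<open>?Ls \<noteq> ?Lp\<close> by (cases fwd) auto
  have "consistent_at (\<lambda>j. L (cs!j)) j p fwd"
    unfolding consistent_at_def using p succ_port pred_port by simp
  moreover have "Out ?v ! i = (if nbrs G ?v ! i = cs!(cyc_succ n j)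
      then even (if fwd then p else cyc_pred n p) else even (if fwd then cyc_pred n p else p))"
    if "i < 2" for i
  proof -
    have "i = ks \<or> i = kp" using that ks_kp by auto
    then show ?thesis using ports succ_port pred_port nth_cs_succ_neq_pred[OF j] by auto
  qed
  ultimately show thesis using that len by blast
qed

lemma (in ring_enum) word_verifier_sound:
  assumes W: "edge_coding_word n W" and "odd n"
    and I: "\<forall>v\<in>verts G. I v = []" and acc: "accepts (word_verifier n W) (G, I, Out) L"
  shows "ec_feasible (G, I, Out) \<and> card (ec_set G Out) = (n + 1) div 2"
proof -
  interpret edge_coding_word n W by (rule W)
  have "\<exists>p fwd. consistent_at (\<lambda>j. L (cs!j)) j p fwd \<and> length (Out (cs!j)) = 2 \<and>
      (\<forall>i<2. Out (cs!j) ! i = (if nbrs G (cs!j) ! i = cs!(cyc_succ n j)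
        then even (if fwd then p else cyc_pred n p) else even (if fwd then cyc_pred n p else p)))"
    if j: "j < n" for j
  proof -
    have "word_verifier n W (Out (cs!j)) (L (cs!j)) (map L (nbrs G (cs!j)))"
      using acc I nth_cs_in_verts[OF j] unfolding accepts_def by simp
    then show ?thesis using word_verifier_local[OF W j] by metis
  qed
  then obtain pos ori where claims: "\<And>j. j < n \<Longrightarrow> consistent_at (\<lambda>j. L (cs!j)) j (pos j) (ori j) \<and>
      length (Out (cs!j)) = 2 \<and> (\<forall>i<2. Out (cs!j) ! i = (if nbrs G (cs!j) ! i = cs!(cyc_succ n j)
        then even (if ori j then pos j else cyc_pred n (pos j))
        else even (if ori j then cyc_pred n (pos j) else pos j)))"
    by metis
  interpret consistent_labelling n W "\<lambda>j. L (cs!j)" pos ori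
    by unfold_locales (use claims in blast)
  define \<beta> where "\<beta> j = even (edge_pos j)" for j
  have out: "ring_output G cs n Out \<beta>"
    unfolding ring_output_def
  proof (intro allI impI)
    fix j assume "j < n"
    have "\<beta> j = even (if ori j then pos j else cyc_pred n (pos j))"
      "\<beta> (cyc_pred n j) = even (if ori j then cyc_pred n (pos j) else pos j)"
      unfolding \<beta>_def edge_pos_pred[OF \<open>j < n\<close>] unfolding edge_pos_def by simp_all
    then show "length (Out (cs!j)) = 2 \<and> (\<forall>i<2. Out (cs!j) ! i =
        (if nbrs G (cs!j) ! i = cs!(cyc_succ n j) then \<beta> j else \<beta> (cyc_pred n j)))"
      using claims[OF \<open>j < n\<close>] by simp
  qed
  have "\<beta> (cyc_pred n j) \<or> \<beta> j" if "j < n" for j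
  proof -
    have "cyc_pred n j < n" "edge_pos (cyc_pred n j) < n" using cyc_pred_less n_pos edge_pos_less by auto
    then show ?thesis
      using edge_pos_succ[of "cyc_pred n j"] cyc_succ_pred[OF that] even_or_even_cyc_succ[OF \<open>odd n\<close>]
        even_cyc_pred_or_even unfolding \<beta>_def by (cases "ori 0") auto
  qed
  then have "ec_feasible (G, I, Out)"
    using I ec_encoding_ok_ring_output[OF out] edge_cover_iff_ring_output[OF out] by simp
  moreover have "card {j. j < n \<and> \<beta> j} = card {q. q < n \<and> even q}"
    unfolding \<beta>_def using inj_on_edge_pos edge_pos_less by (intro card_perm_filter) auto
  ultimately show ?thesis using card_ec_set_ring_output[OF out] card_even_below by simp
qed

lemma (in ring_enum) word_verifier_accepts_at:
  assumes W: "edge_coding_word n W" and out: "ring_output G cs n Out \<beta>" and j: "j < n" and "p < n"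
    and labels: "L (cs!j) = W p" "L (cs!(cyc_succ n j)) = W (cyc_succ n p)"
      "L (cs!(cyc_pred n j)) = W (cyc_pred n p)"
    and bits: "\<beta> j \<longleftrightarrow> even p" "\<beta> (cyc_pred n j) \<longleftrightarrow> even (cyc_pred n p)"
  shows "word_verifier n W (Out (cs!j)) (L (cs!j)) (map L (nbrs G (cs!j)))"
proof -
  interpret edge_coding_word n W by (rule W)
  let ?v = "cs!j"
  obtain ks kp where ports: "ks < 2" "kp < 2" "ks \<noteq> kp"
    "nbrs G ?v ! ks = cs!(cyc_succ n j)" "nbrs G ?v ! kp = cs!(cyc_pred n j)"
    using ports_cs[OF j] by blast
  have ks_kp: "(ks = 0 \<and> kp = 1) \<or> (ks = 1 \<and> kp = 0)" using ports(1-3) by auto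
  have "length (nbrs G ?v) = 2" using nbrs_cs j by simp
  then have N: "map L (nbrs G ?v) ! ks = W (cyc_succ n p)" "map L (nbrs G ?v) ! kp = W (cyc_pred n p)"
    using ports labels by simp_all
  have S: "Out ?v ! ks = even p" "Out ?v ! kp = even (cyc_pred n p)" "length (Out ?v) = 2"
    using out ports j bits nth_cs_succ_neq_pred[OF j] unfolding ring_output_def by auto
  have "W (cyc_pred n p) \<noteq> W (cyc_succ n p)" using skip_distinct \<open>p < n\<close> by blast
  then have "map L (nbrs G ?v) ! 0 \<noteq> map L (nbrs G ?v) ! 1" using N ks_kp by auto
  moreover have "\<forall>i<2. (map L (nbrs G ?v) ! i = W (cyc_succ n p) \<and> Out ?v ! i = even p) \<or>
      (map L (nbrs G ?v) ! i = W (cyc_pred n p) \<and> Out ?v ! i = even (cyc_pred n p))"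
  proof (intro allI impI)
    fix i :: nat assume "i < 2"
    then have "i = ks \<or> i = kp" using ks_kp by auto
    then show "(map L (nbrs G ?v) ! i = W (cyc_succ n p) \<and> Out ?v ! i = even p) \<or>
        (map L (nbrs G ?v) ! i = W (cyc_pred n p) \<and> Out ?v ! i = even (cyc_pred n p))"
      using N S by auto
  qed
  ultimately show ?thesis
    unfolding word_verifier_def using S(3) \<open>length (nbrs G ?v) = 2\<close> \<open>p < n\<close> labels(1)
    by (intro conjI exI[of _ p]) simp_all
qed

text \<open>A cover of size (n + 1)/2 alternates around the ring starting from its doubly covered node s,
  so rotating the positions by s makes every node's claim true.\<close>

lemma (in ring_enum) word_verifier_complete:
  assumes W: "edge_coding_word n W" and "odd n"
    and feasible: "ec_feasible (G, I, Out)" and small: "card (ec_set G Out) \<le> (n + 1) div 2"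
  obtains L where "\<forall>v \<in> verts G. \<exists>p<n. L v = W p" and "accepts (word_verifier n W) (G, I, Out) L"
proof -
  obtain k where n: "n = 2 * k + 1" using \<open>odd n\<close> oddE by blast
  define \<beta> where "\<beta> j = Out (cs!j) ! port_succ j" for j
  have out: "ring_output G cs n Out \<beta>"
    unfolding \<beta>_def using feasible ring_output_of_encoding by simp
  have cover: "\<forall>j<n. \<beta> (cyc_pred n j) \<or> \<beta> j"
    using feasible edge_cover_iff_ring_output[OF out] by simp
  have "card {j. j < n \<and> \<beta> j} \<le> k + 1" using small card_ec_set_ring_output[OF out] n by simp
  then obtain s where "s < n" and alternating: "\<And>q. q < n \<Longrightarrow> \<beta> ((s + q) mod n) \<longleftrightarrow> even q"
    using small_cover_alternates[OF n cover] by blast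
  define pos where "pos j = (j + (n - s)) mod n" for j
  have pos_less: "pos j < n" for j unfolding pos_def using n_pos by simp
  have pos_succ: "pos (cyc_succ n j) = cyc_succ n (pos j)"
    and pos_pred: "pos (cyc_pred n j) = cyc_pred n (pos j)"
    if "j < n" for j
    unfolding pos_def using that cyc_succ_add_mod cyc_pred_add_mod[OF n_pos]
      by (simp_all add: cyc_succ_eq cyc_pred_eq)
  have \<beta>_pos: "\<beta> j \<longleftrightarrow> even (pos j)" if "j < n" for j
  proof -
    have "(s + pos j) mod n = j" unfolding pos_def using \<open>s < n\<close> that by (simp add: mod_add_right_eq)
    then show ?thesis using alternating[of "pos j"] pos_less[of j] by simp
  qed
  define L where "L v = W (pos (index_cs v))" for v
  have L_nth: "L (cs!j) = W (pos j)" if "j < n" for j unfolding L_def using index_cs_nth that by simp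
  have "word_verifier n W (I v @ Out v) (L v) (map L (nbrs G v))" if v: "v \<in> verts G" for v
  proof -
    obtain j where j: "j < n" "v = cs!j" using vert_cs v by blast
    then have "cyc_succ n j < n" "cyc_pred n j < n" using cyc_succ_less cyc_pred_less n_pos by auto
    then have "word_verifier n W (Out (cs!j)) (L (cs!j)) (map L (nbrs G (cs!j)))"
      using word_verifier_accepts_at[OF W out j(1) pos_less] L_nth pos_succ pos_pred \<beta>_pos j(1) by simp
    moreover have "I v = []" using feasible v by simp
    ultimately show ?thesis using j(2) by simp
  qed
  then have "accepts (word_verifier n W) (G, I, Out) L" unfolding accepts_def by simp
  moreover have "\<forall>v \<in> verts G. \<exists>p<n. L v = W p" unfolding L_def using pos_less by blast
  ultimately show thesis using that by blast
qed

theorem PLS_odd_ring_of_edge_coding_word: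
  fixes W :: "nat \<Rightarrow> bool list"
  assumes W: "edge_coding_word n W" and "odd n" and "n \<ge> 3" and short: "\<forall>p<n. length (W p) \<le> s"
  shows "has_APLS_min ec_feasible ec_size (\<lambda>G. is_ring G n) 1 s"
  unfolding has_APLS_min_def has_GPLS_def
proof (intro exI[of _ "word_verifier n W"] conjI ballI allI)
  fix x assume "x \<in> APLS_yes ec_feasible ec_size (\<lambda>G. is_ring G n)"
  then obtain G I Out where x: "x = (G, I, Out)" and "valid_graph G" "is_ring G n"
    and feasible: "ec_feasible (G, I, Out)"
    and opt: "ec_size (G, I, Out) = OPT_min ec_feasible ec_size G I"
    unfolding APLS_yes_def APLS_universe_def by auto
  obtain cs where "ring_enum G cs n" using ring_enum_of_is_ring \<open>valid_graph G\<close> \<open>is_ring G n\<close> \<open>n \<ge> 3\<close>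
    by blast
  then interpret ring_enum G cs n .
  have "card (ec_set G Out) \<le> (n + 1) div 2" using opt feasible OPT_min_ring_enum by simp
  then obtain L where labels: "\<forall>v \<in> verts G. \<exists>p<n. L v = W p"
    and "accepts (word_verifier n W) (G, I, Out) L"
    using word_verifier_complete[OF W \<open>odd n\<close> feasible] by blast
  moreover have "\<forall>v\<in>verts G. length (L v) \<le> s" using labels short by fastforce
  ultimately show "\<exists>L. (\<forall>v\<in>verts (fst x). length (L v) \<le> s) \<and> accepts (word_verifier n W) x L"
    using x by auto
next
  fix x L assume "x \<in> APLS_no_min ec_feasible ec_size (\<lambda>G. is_ring G n) 1"
  then obtain G I Out Out' where x: "x = (G, I, Out)"
    and "valid_graph G" "is_ring G n" "ec_feasible (G, I, Out')"
    and not_opt: "\<not> (ec_feasible (G, I, Out) \<and> ec_size (G, I, Out) \<le> OPT_min ec_feasible ec_size G I)"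
    unfolding APLS_no_min_def APLS_universe_def by auto
  obtain cs where "ring_enum G cs n" using ring_enum_of_is_ring \<open>valid_graph G\<close> \<open>is_ring G n\<close> \<open>n \<ge> 3\<close>
    by blast
  then interpret ring_enum G cs n .
  have I: "\<forall>v\<in>verts G. I v = []" using \<open>ec_feasible (G, I, Out')\<close> by simp
  show "\<not> accepts (word_verifier n W) x L"
    using word_verifier_sound[OF W \<open>odd n\<close> I] OPT_min_ring_enum[OF I] not_opt x by auto
qed

section \<open>Labels of r + 4 bits\<close>

lemma edge_coding_word_comp_inj:
  assumes "edge_coding_word n W" and "inj_on f (W ` {..<n})"
  shows "edge_coding_word n (\<lambda>p. f (W p))"
proof -
  interpret edge_coding_word n W by (rule assms(1))
  have inj: "f (W p) = f (W q) \<longleftrightarrow> W p = W q" if "p < n" "q < n" for p q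
    using assms(2) that by (auto dest: inj_onD)
  have succ: "cyc_succ n p < n" and pred: "cyc_pred n p < n" for p
    using cyc_succ_less cyc_pred_less word_len_pos by auto
  show ?thesis
  proof
    fix p q assume "p < n" "q < n"
      and "{f (W p), f (W (cyc_succ n p))} = {f (W q), f (W (cyc_succ n q))}"
    then have "{W p, W (cyc_succ n p)} = {W q, W (cyc_succ n q)}"
      using inj succ by (simp add: doubleton_eq_iff)
    then show "p = q" using edge_pair_inj \<open>p < n\<close> \<open>q < n\<close> by blast
  qed (use word_len_pos adjacent_distinct skip_distinct inj succ pred in auto)
qed

lemma (in pair_code) edge_coding_word_code: "edge_coding_word n (code k Q)"
  by unfold_locales (use code_adjacent_distinct code_skip_distinct code_edge_pair_inj in auto)

fun bits_of :: "nat \<Rightarrow> nat \<Rightarrow> bool list" where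
  "bits_of 0 x = []"
| "bits_of (Suc l) x = odd x # bits_of l (x div 2)"

lemma length_bits_of: "length (bits_of l x) = l"
  by (induction l arbitrary: x) auto

lemma bits_of_inj: "x < 2 ^ l \<Longrightarrow> y < 2 ^ l \<Longrightarrow> bits_of l x = bits_of l y \<Longrightarrow> x = y"
proof (induction l arbitrary: x y)
  case (Suc l)
  then have "odd x = odd y" and "bits_of l (x div 2) = bits_of l (y div 2)" by auto
  moreover have "x div 2 < 2 ^ l" "y div 2 < 2 ^ l" using Suc.prems by auto
  ultimately have "x div 2 = y div 2" "odd x = odd y" using Suc.IH by blast+
  then show ?case by (metis div_mult_mod_eq odd_iff_mod_2_eq_one parity_cases)
qed simp

lemma pair_code_pow2:
  assumes "k \<ge> 1" and "k \<le> 2 ^ (2 * r + 3)"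
  shows "pair_code k (2 ^ (r + 2))"
proof
  have "(2::nat) ^ (r + 2) * 2 ^ (r + 2) = 2 * 2 ^ (2 * r + 3)"
    by (simp flip: power_add power_Suc)
  then show "2 * k \<le> 2 ^ (r + 2) * 2 ^ (r + 2)" using assms(2) by simp
qed (use assms(1) in simp_all)

definition pos_label :: "nat \<Rightarrow> nat \<Rightarrow> nat \<Rightarrow> bool list" where
  "pos_label k r p = bits_of (r + 4) (code k (2 ^ (r + 2)) p)"

theorem PLS_small_odd_ring:
  assumes "k \<ge> 1" and "k \<le> 2 ^ (2 * r + 3)"
  shows "has_APLS_min ec_feasible ec_size (\<lambda>G. is_ring G (2 * k + 1)) 1 (r + 4)"
proof (rule PLS_odd_ring_of_edge_coding_word)
  interpret pair_code k "2 ^ (r + 2)" using pair_code_pow2 assms .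
  have "2 * 2 ^ (r + 2) + 1 \<le> (2::nat) ^ (r + 4)"
    using one_le_power[of "2::nat" r] by (simp add: power_add)
  then have "code k (2 ^ (r + 2)) p < 2 ^ (r + 4)" if "p < n" for p
    using code_less[OF that] by linarith
  then have "code k (2 ^ (r + 2)) ` {..<n} \<subseteq> {..<2 ^ (r + 4)}" by auto
  moreover have "inj_on (bits_of (r + 4)) {..<2 ^ (r + 4)}"
    by (rule inj_onI) (use bits_of_inj in auto)
  ultimately have "inj_on (bits_of (r + 4)) (code k (2 ^ (r + 2)) ` {..<n})"
    by (rule inj_on_subset[rotated])
  then show "edge_coding_word (2 * k + 1) (pos_label k r)"
    unfolding pos_label_def using edge_coding_word_comp_inj[OF edge_coding_word_code] by blast
qed (use assms(1) in \<open>simp_all add: pos_label_def length_bits_of\<close>)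

theorem lemma5p6:
  shows "\<exists>c :: nat. \<forall>(\<kappa> :: nat) (r :: nat). \<kappa> \<ge> 1 \<longrightarrow>
     has_APLS_min ec_feasible ec_size (\<lambda>G. odd_girth_ge G (2 * \<kappa> + 1))
        ((real \<kappa> + 1) / real \<kappa>) r \<longrightarrow>
     has_APLS_min ec_feasible ec_size (\<lambda>G. is_ring G (2 * \<kappa> + 1)) 1 (r + c)"
proof (intro exI[of _ 4] allI impI)
  fix \<kappa> r :: nat
  assume "\<kappa> \<ge> 1"
    and "has_APLS_min ec_feasible ec_size (\<lambda>G. odd_girth_ge G (2 * \<kappa> + 1)) ((real \<kappa> + 1) / real \<kappa>) r"
  then have "\<kappa> \<le> 2 ^ (2 * r + 3)" using no_APLS_large_kappa not_le by blast
  then show "has_APLS_min ec_feasible ec_size (\<lambda>G. is_ring G (2 * \<kappa> + 1)) 1 (r + 4)"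
    using PLS_small_odd_ring \<open>\<kappa> \<ge> 1\<close> by blast
qed

end
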